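(* Fix $T>0$ and assume the nominal disturbance distribution satisfies $\mathbb{E}_{\mathbb{P}_T^\circ}[\boldsymbol{\xi}_T\boldsymbol{\xi}_T^\ast]=\mathcal{I}$. Then $\mathcal{K}_T^\circ:=\mathcal{L}_T\mathcal{H}_T^\ast(\mathcal{I}+\mathcal{H}_T\mathcal{H}_T^\ast)^{-1}$ is the unique optimal estimator, among all (not necessarily causal) linear estimators $\mathcal{K}_T\in\mathbb{R}^{Td_s\times Td_y}$, minimizing the worst-case mean-squared error $\mathsf{E}_T(\mathcal{K}_T,\rho_T)=\sup_{\mathbb{P}_T\in\mathcal{W}_T(\mathbb{P}_T^\circ,\rho_T)}\mathbb{E}_{\mathbb{P}_T}\|\mathcal{T}_{\mathcal{K}_T}\boldsymbol{\xi}_T\|^2$, for every $\rho_T\ge 0$.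
   Context: State-space model: $x_{t+1}=Ax_t+Bw_t$, $y_t=C_yx_t+v_t$, $s_t=C_sx_t$, with $(A,C_y)$, $(A,C_s)$ detectable and $(A,B)$ controllable. For horizon $T$: $\mathbf{y}_T=[y_0;\dots;y_{T-1}]$, $\mathbf{s}_T=[s_0;\dots;s_{T-1}]$, $\mathbf{w}_T=[x_0;w_0;\dots;w_{T-2}]$, $\mathbf{v}_T=[v_0;\dots;v_{T-1}]$, $\boldsymbol{\xi}_T=[\mathbf{w}_T;\mathbf{v}_T]$, and $\mathbf{y}_T=\mathcal{H}_T\mathbf{w}_T+\mathbf{v}_T$, $\mathbf{s}_T=\mathcal{L}_T\mathbf{w}_T$ where $\mathcal{H}_T,\mathcal{L}_T$ are the block lower-triangular matrices determined by the model (the $t$-th block of $\mathcal{H}_T\mathbf{w}_T$ is $C_yA^tx_0+\sum_{\tau<t}C_yA^{t-1-\tau}Bw_\tau$, similarly for $\mathcal{L}_T$ with $C_s$). A linear estimator $\mathcal{K}_T$ gives $\widehat{\mathbf{s}}_T=\mathcal{K}_T\mathbf{y}_T$ and error $\widehat{\mathbf{s}}_T-\mathbf{s}_T=\mathcal{T}_{\mathcal{K}_T}\boldsymbol{\xi}_T$ with $\mathcal{T}_{\mathcal{K}_T}=[\mathcal{K}_T\mathcal{H}_T-\mathcal{L}_T,\ \mathcal{K}_T]$. Disturbances are zero-mean. $\mathcal{W}_T(\mathbb{P}_T^\circ,\rho_T)$ is the set of distributions with finite second moment at Wasserstein-2 distance at most $\rho_T$ from the nominal $\mathbb{P}_T^\circ$,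 where $\mathsf{W}_2(\mathbb{P}_1,\mathbb{P}_2)=(\inf\mathbb{E}\|\mathbf{w}_1-\mathbf{w}_2\|^2)^{1/2}$ over couplings. *)

theory Defs
  imports "Jordan_Normal_Form.Gauss_Jordan_Elimination" "HOL-Probability.Probability"
begin

definition detectable :: "real mat \<Rightarrow> real mat \<Rightarrow> bool" where
  "detectable A C \<longleftrightarrow>
     (\<forall>(lam::complex) v. v \<in> carrier_vec (dim_row A) \<and> v \<noteq> 0\<^sub>v (dim_row A)
        \<and> map_mat complex_of_real A *\<^sub>v v = lam \<cdot>\<^sub>v v
        \<and> map_mat complex_of_real C *\<^sub>v v = 0\<^sub>v (dim_row C)
        \<longrightarrow> cmod lam < 1)"

text \<open>Controllability of (A,B) (Kalman rank condition: the controllability matrix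
  [B, AB, ..., A^(n-1) B] has full row rank n, i.e. no nonzero left annihilator).\<close>
definition controllable :: "real mat \<Rightarrow> real mat \<Rightarrow> bool" where
  "controllable A B \<longleftrightarrow>
     (\<forall>v \<in> carrier_vec (dim_row A).
        (\<forall>k < dim_row A. transpose_mat (A ^\<^sub>m k * B) *\<^sub>v v = 0\<^sub>v (dim_col B))
        \<longrightarrow> v = 0\<^sub>v (dim_row A))"

text \<open>Block lower-triangular matrix mapping w_T = [x_0; w_0; ...; w_(T-2)] to
  [C x_0; ...; C x_(T-1)]: block (t, x_0) is C A^t, block (t, w_tau) is
  C A^(t-1-tau) B for tau < t and 0 otherwise.\<close>
definition horizon_op :: "real mat \<Rightarrow> real mat \<Rightarrow> real mat \<Rightarrow> nat \<Rightarrow> real mat" where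
  "horizon_op A B C T =
     (let dx = dim_row A; dw = dim_col B; d = dim_row C in
      Matrix.mat (T * d) (dx + (T - 1) * dw) (\<lambda>(r, c).
        let t = r div d; i = r mod d in
        if c < dx then (C * A ^\<^sub>m t) $$ (i, c)
        else (let tau = (c - dx) div dw; j = (c - dx) mod dw in
              if tau < t then (C * A ^\<^sub>m (t - 1 - tau) * B) $$ (i, j) else 0)))"

text \<open>Error operator T_K = [K H - L, K], acting on xi = [w; v].\<close>
definition err_op :: "real mat \<Rightarrow> real mat \<Rightarrow> real mat \<Rightarrow> real mat" where
  "err_op K H L =
     Matrix.mat (dim_row L) (dim_col H + dim_col K) (\<lambda>(r, c).
        if c < dim_col H then (K * H - L) $$ (r, c) else K $$ (r, c - dim_col H))"

definition central_estimator :: "real mat \<Rightarrow> real mat \<Rightarrow> real mat" where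
  "central_estimator H L =
     L * transpose_mat H * the (mat_inverse (1\<^sub>m (dim_row H) + H * transpose_mat H))"

definition RN :: "nat \<Rightarrow> (nat \<Rightarrow> real) measure" where
  "RN N = (\<Pi>\<^sub>M i \<in> {..<N}. borel)"

definition sqnorm :: "nat \<Rightarrow> (nat \<Rightarrow> real) \<Rightarrow> real" where
  "sqnorm N x = (\<Sum>i<N. (x i)\<^sup>2)"

definition distrs2 :: "nat \<Rightarrow> (nat \<Rightarrow> real) measure set" where
  "distrs2 N = {P. prob_space P \<and> sets P = sets (RN N)
                   \<and> (\<integral>\<^sup>+ x. ennreal (sqnorm N x) \<partial>P) < \<infinity>}"

definition couplings :: "nat \<Rightarrow> (nat \<Rightarrow> real) measure \<Rightarrow> (nat \<Rightarrow> real) measure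
                          \<Rightarrow> ((nat \<Rightarrow> real) \<times> (nat \<Rightarrow> real)) measure set" where
  "couplings N P1 P2 = {C. prob_space C \<and> sets C = sets (RN N \<Otimes>\<^sub>M RN N)
                           \<and> distr C (RN N) fst = P1 \<and> distr C (RN N) snd = P2}"

definition wasserstein2_sq :: "nat \<Rightarrow> (nat \<Rightarrow> real) measure \<Rightarrow> (nat \<Rightarrow> real) measure \<Rightarrow> ennreal" where
  "wasserstein2_sq N P1 P2 =
     (INF C \<in> couplings N P1 P2. \<integral>\<^sup>+ z. ennreal (sqnorm N (\<lambda>i. fst z i - snd z i)) \<partial>C)"

text \<open>Wasserstein ball W(P0, rho): W_2(P, P0) <= rho, equivalently W_2(P,P0)^2 <= rho^2 (rho >= 0).\<close>
definition wball :: "nat \<Rightarrow> (nat \<Rightarrow> real) measure \<Rightarrow> real \<Rightarrow> (nat \<Rightarrow> real) measure set" where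
  "wball N P0 rho = {P \<in> distrs2 N. wasserstein2_sq N P P0 \<le> ennreal (rho\<^sup>2)}"

definition worst_mse :: "real mat \<Rightarrow> real mat \<Rightarrow> real mat \<Rightarrow> (nat \<Rightarrow> real) measure \<Rightarrow> real \<Rightarrow> ennreal" where
  "worst_mse H L K P0 rho =
     (let Tk = err_op K H L; N = dim_col Tk in
      SUP P \<in> wball N P0 rho.
        \<integral>\<^sup>+ xi. ennreal ((Tk *\<^sub>v Matrix.vec N xi) \<bullet> (Tk *\<^sub>v Matrix.vec N xi)) \<partial>P)"

end

theory Submission
  imports Defs "Jordan_Normal_Form.Determinant"
begin

(*
  Put G = [H, I]. Every error operator splits as T_K = T_K0 + (K - K0) G, and the central
  estimator is characterised by T_K0 G^T = 0, i.e. K0 (I + H H^T) = L H^T.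

  If ||A - I||_F^2 <= rho^2, the law of A xi under the nominal distribution lies
  in the Wasserstein ball (couple A xi with xi), and by the identity covariance its mean-squared
  error is ||T_K A||_F^2. If moreover G A = G and A G^T = G^T, orthogonality gives
  ||T_K A||^2 = ||T_K0 A||^2 + ||(K - K0) G||^2, whose last term is positive for K /= K0.

  Let M = T_K0^T T_K0, let gamma exceed its largest eigenvalue and put
  A = gamma (gamma I - M)^-1. Completing the square gives the pointwise inequality
  |T_K0 x|^2 <= gamma |x - y|^2 + |T_K0 A y|^2 - gamma |(A - I) y|^2, and integrating it over
  nearly optimal couplings bounds the worst-case error of K0 by
  gamma rho^2 + ||T_K0 A||^2 - gamma ||A - I||^2. Since M G^T = 0, this A fixes G^T.
  The map gamma |-> ||A - I||^2 is continuous, unbounded near the largest eigenvalue and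
  vanishing at infinity, so some gamma makes it equal to rho^2; then both bounds meet at
  ||T_K0 A||^2 with a strict gap for every K /= K0. If rho = 0 or T_K0 = 0 the cruder bound
  |T x|^2 <= (1 + e) |T y|^2 + (1 + 1/e) ||T||^2 |x - y|^2 suffices.
*)

section \<open>Squared norms of vectors and matrices\<close>

definition sq_norm_vec :: "real Matrix.vec \<Rightarrow> real" where
  "sq_norm_vec v = scalar_prod v v"

definition frobenius_sq :: "real mat \<Rightarrow> real" where
  "frobenius_sq X = (\<Sum>i<dim_row X. \<Sum>j<dim_col X. (X $$ (i,j))^2)"

definition frobenius_inner :: "real mat \<Rightarrow> real mat \<Rightarrow> real" where
  "frobenius_inner X Y = (\<Sum>i<dim_row X. \<Sum>j<dim_col X. X $$ (i,j) * Y $$ (i,j))"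

lemma sq_norm_vec_sum: "v \<in> carrier_vec n \<Longrightarrow> sq_norm_vec v = (\<Sum>i<n. (v$i)^2)"
  by (auto simp: sq_norm_vec_def scalar_prod_def power2_eq_square atLeast0LessThan)

lemma sq_norm_vec_nonneg: "0 \<le> sq_norm_vec v"
  by (auto simp: sq_norm_vec_def scalar_prod_def intro!: sum_nonneg)

lemma frobenius_sq_nonneg: "0 \<le> frobenius_sq X"
  by (auto simp: frobenius_sq_def intro!: sum_nonneg)

lemma scalar_prod_Cauchy_Schwarz: assumes "v \<in> carrier_vec n" "w \<in> carrier_vec n"
  shows "(scalar_prod v w)^2 \<le> sq_norm_vec v * sq_norm_vec w"
proof -
  have "scalar_prod v w = (\<Sum>i<n. v$i * w$i)" using assms
    by (auto simp: scalar_prod_def atLeast0LessThan)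
  thus ?thesis using Cauchy_Schwarz_ineq_sum[of "\<lambda>i. v$i" "\<lambda>i. w$i" "{..<n}"]
    sq_norm_vec_sum[OF assms(1)] sq_norm_vec_sum[OF assms(2)] by simp
qed

lemma sq_index_le_sq_norm_vec:
  assumes "v \<in> carrier_vec n" "i < n" shows "(v$i)^2 \<le> sq_norm_vec v"
proof -
  have "(v$i)^2 \<le> (\<Sum>k<n. (v$k)^2)"
    by (rule member_le_sum[of i "{..<n}" "\<lambda>k. (v$k)^2"]) (use assms in auto)
  thus ?thesis using sq_norm_vec_sum[OF assms(1)] by simp
qed

lemma sq_norm_vec_eq_zeroD:
  assumes "v \<in> carrier_vec n" "sq_norm_vec v = 0" shows "v = 0\<^sub>v n"
proof (rule eq_vecI)
  fix i assume "i < dim_vec (0\<^sub>v n)"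
  hence i: "i < n" by simp
  have "(v$i)^2 \<le> 0" using sq_index_le_sq_norm_vec[OF assms(1) i] assms(2) by simp
  thus "v $ i = 0\<^sub>v n $ i" using i by simp
qed (use assms in auto)

lemma sq_norm_vec_smult: "sq_norm_vec (c \<cdot>\<^sub>v v) = c^2 * sq_norm_vec v"
  by (simp add: sq_norm_vec_def power2_eq_square)

lemma frobenius_sq_rows: assumes "X \<in> carrier_mat m n"
  shows "frobenius_sq X = (\<Sum>i<m. sq_norm_vec (Matrix.row X i))"
proof -
  have "sq_norm_vec (Matrix.row X i) = (\<Sum>j<n. (X $$ (i,j))^2)" if "i < m" for i
    using assms that by (subst sq_norm_vec_sum[of _ n]) auto
  thus ?thesis using assms by (auto simp: frobenius_sq_def intro!: sum.cong)
qed

lemma frobenius_sq_cols: assumes "X \<in> carrier_mat m n"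
  shows "frobenius_sq X = (\<Sum>j<n. sq_norm_vec (col X j))"
proof -
  have "sq_norm_vec (col X j) = (\<Sum>i<m. (X $$ (i,j))^2)" if "j < n" for j
    using assms that by (subst sq_norm_vec_sum[of _ m]) auto
  hence "(\<Sum>j<n. sq_norm_vec (col X j)) = (\<Sum>j<n. \<Sum>i<m. (X $$ (i,j))^2)" by simp
  also have "\<dots> = (\<Sum>i<m. \<Sum>j<n. (X $$ (i,j))^2)" by (rule sum.swap)
  finally show ?thesis using assms by (simp add: frobenius_sq_def)
qed

lemma sq_norm_mult_mat_vec_le: assumes X: "X \<in> carrier_mat m n" and u: "u \<in> carrier_vec n"
  shows "sq_norm_vec (X *\<^sub>v u) \<le> frobenius_sq X * sq_norm_vec u"
proof -
  have "sq_norm_vec (X *\<^sub>v u) = (\<Sum>i<m. (scalar_prod (Matrix.row X i) u)^2)"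
    using X u by (auto simp: sq_norm_vec_sum[of _ m])
  also have "\<dots> \<le> (\<Sum>i<m. sq_norm_vec (Matrix.row X i) * sq_norm_vec u)"
    by (rule sum_mono, rule scalar_prod_Cauchy_Schwarz[of _ n]) (use X u in auto)
  also have "\<dots> = frobenius_sq X * sq_norm_vec u" using frobenius_sq_rows[OF X]
    by (simp add: sum_distrib_right)
  finally show ?thesis .
qed

lemma scalar_prod_transpose_mult:
  fixes Tm :: "real mat"
  assumes T: "Tm \<in> carrier_mat m n" and x: "x \<in> carrier_vec n"
    and y: "y \<in> carrier_vec n"
  shows "scalar_prod x ((transpose_mat Tm * Tm) *\<^sub>v y) = scalar_prod (Tm *\<^sub>v x) (Tm *\<^sub>v y)"
proof -
  have "(transpose_mat Tm * Tm) *\<^sub>v y = transpose_mat Tm *\<^sub>v (Tm *\<^sub>v y)"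
    using T y by (auto intro: assoc_mult_mat_vec)
  moreover have "scalar_prod x (transpose_mat Tm *\<^sub>v (Tm *\<^sub>v y)) = scalar_prod (transpose_mat Tm *\<^sub>v (Tm *\<^sub>v y)) x"
    by (rule comm_scalar_prod[where n = n]) (use T x y in auto)
  moreover have "\<dots> = scalar_prod (Tm *\<^sub>v y) (Tm *\<^sub>v x)"
    by (rule transpose_vec_mult_scalar[OF T x]) (use T y in auto)
  moreover have "\<dots> = scalar_prod (Tm *\<^sub>v x) (Tm *\<^sub>v y)"
    by (rule comm_scalar_prod[where n = m]) (use T x y in auto)
  ultimately show ?thesis by simp
qed

lemma scalar_prod_transpose_mult_self:
  fixes Tm :: "real mat" assumes "Tm \<in> carrier_mat m n" and "x \<in> carrier_vec n"
  shows "scalar_prod x ((transpose_mat Tm * Tm) *\<^sub>v x) = sq_norm_vec (Tm *\<^sub>v x)"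
  using scalar_prod_transpose_mult[OF assms assms(2)] by (simp add: sq_norm_vec_def)

lemma scalar_prod_sym_mat_swap:
  fixes Q :: "real mat" assumes Q: "Q \<in> carrier_mat n n" and sym: "transpose_mat Q = Q"
  and x: "x \<in> carrier_vec n" and y: "y \<in> carrier_vec n"
  shows "scalar_prod x (Q *\<^sub>v y) = scalar_prod y (Q *\<^sub>v x)"
proof -
  have "scalar_prod y (Q *\<^sub>v x) = scalar_prod (transpose_mat Q *\<^sub>v y) x"
    by (rule transpose_vec_mult_scalar[OF Q x y, symmetric])
  also have "\<dots> = scalar_prod x (transpose_mat Q *\<^sub>v y)"
    by (rule comm_scalar_prod[where n = n]) (use Q x y in auto)
  finally show ?thesis using sym by simp
qed

lemma quadratic_nonneg_discriminant: fixes A B C :: real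
  assumes h: "\<And>t. 0 \<le> A + 2 * B * t + C * t^2" shows "B^2 \<le> A * C"
proof -
  have C: "C \<ge> 0"
  proof (rule ccontr)
    assume "\<not> C \<ge> 0"
    hence c: "C < 0" by simp
    define t where "t = sqrt ((\<bar>A\<bar> + 1) / (- C))"
    have nn: "0 \<le> (\<bar>A\<bar> + 1) / (- C)" using c by (intro divide_nonneg_pos) auto
    have "t^2 = (\<bar>A\<bar> + 1) / (- C)" unfolding t_def using nn by (rule real_sqrt_pow2)
    hence ct: "C * t^2 = - (\<bar>A\<bar> + 1)" using c by (simp add: field_simps)
    have "0 \<le> A + 2 * B * t + C * t^2" "0 \<le> A + 2 * B * (-t) + C * (-t)^2" using h by blast+
    hence "0 \<le> A + C * t^2" by simp
    thus False using ct by (simp add: abs_if split: if_splits)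
  qed
  show ?thesis
  proof (cases "C = 0")
    case True
    have "B = 0"
    proof (rule ccontr)
      assume b: "B \<noteq> 0"
      have "0 \<le> A + 2 * B * (- (\<bar>A\<bar> + 1) / (2 * B))"
        using h[of "- (\<bar>A\<bar> + 1) / (2 * B)"] True by simp
      also have "\<dots> = A - \<bar>A\<bar> - 1" using b by (simp add: field_simps)
      finally show False by (simp add: abs_if split: if_splits)
    qed
    thus ?thesis using True by simp
  next
    case False
    with C have C: "C > 0" by simp
    have "0 \<le> A + 2 * B * (- B / C) + C * (- B / C)^2" by (rule h)
    also have "\<dots> = A - B^2 / C" using C by (simp add: field_simps power2_eq_square)
    finally show ?thesis using C by (simp add: field_simps)
  qed
qed

lemma abs_index_le_sq_norm_vec: assumes "v \<in> carrier_vec n" "i < n"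
  shows "\<bar>v $ i\<bar> \<le> sqrt (sq_norm_vec v)"
  using real_sqrt_le_mono[OF sq_index_le_sq_norm_vec[OF assms]] by simp

lemma mat_nonzero_index:
  assumes "X \<in> carrier_mat m n" "X \<noteq> 0\<^sub>m m n"
  obtains i j where "i < m" "j < n" "X $$ (i,j) \<noteq> 0"
proof -
  have "\<exists>i j. i < m \<and> j < n \<and> X $$ (i,j) \<noteq> 0"
  proof (rule ccontr)
    assume "\<nexists>i j. i < m \<and> j < n \<and> X $$ (i,j) \<noteq> 0"
    hence "X = 0\<^sub>m m n" using assms(1) by (intro eq_matI) auto
    thus False using assms(2) by simp
  qed
  thus ?thesis using that by blast
qed

lemma mat_inverse_of_trivial_kernel:
  fixes Q :: "'a :: field mat"
  assumes Q: "Q \<in> carrier_mat n n"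
    and kernel: "\<And>v. v \<in> carrier_vec n \<Longrightarrow> Q *\<^sub>v v = 0\<^sub>v n \<Longrightarrow> v = 0\<^sub>v n"
  shows "Q * the (mat_inverse Q) = 1\<^sub>m n \<and> the (mat_inverse Q) * Q = 1\<^sub>m n
    \<and> the (mat_inverse Q) \<in> carrier_mat n n"
proof -
  have "Determinant.det Q \<noteq> 0" using det_0_iff_vec_prod_zero[OF Q] kernel by blast
  hence unit: "Q \<in> Units (ring_mat TYPE('a) n ())" by (rule det_non_zero_imp_unit[OF Q])
  show ?thesis
  proof (cases "mat_inverse Q")
    case None
    thus ?thesis using mat_inverse(1)[OF Q None, of "()"] unit by simp
  next
    case (Some Qi)
    thus ?thesis using mat_inverse(2)[OF Q Some] by simp
  qed
qed

lemma sum_lessThan_add: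
  fixes f :: "nat \<Rightarrow> 'a::comm_monoid_add"
  shows "(\<Sum>c<a+b. f c) = (\<Sum>c<a. f c) + (\<Sum>j<b. f (a + j))"
  by (induct b) (simp_all add: ac_simps)

lemma frobenius_sq_add: assumes X: "X \<in> carrier_mat m n" and Y: "Y \<in> carrier_mat m n"
  shows "frobenius_sq (X + Y) = frobenius_sq X + frobenius_sq Y + 2 * frobenius_inner X Y"
proof -
  have "frobenius_sq (X + Y) = (\<Sum>i<m. \<Sum>j<n. (X $$ (i,j))^2 + (Y $$ (i,j))^2 + 2 * (X $$ (i,j) * Y $$ (i,j)))"
    using X Y by (auto simp: frobenius_sq_def power2_eq_square algebra_simps intro!: sum.cong)
  also have "\<dots> = frobenius_sq X + frobenius_sq Y + 2 * frobenius_inner X Y"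
    using X Y by (simp add: frobenius_sq_def frobenius_inner_def sum.distrib sum_distrib_left)
  finally show ?thesis .
qed

lemma frobenius_inner_mult:
  assumes X: "X \<in> carrier_mat m n" and D: "D \<in> carrier_mat m k"
    and G: "G \<in> carrier_mat k n"
  shows "frobenius_inner X (D * G) = frobenius_inner (X * transpose_mat G) D"
proof -
  have "frobenius_inner X (D * G) = (\<Sum>i<m. \<Sum>c<n. X $$ (i,c) * (\<Sum>j<k. D $$ (i,j) * G $$ (j,c)))"
    using X D G
    by (auto simp: frobenius_inner_def scalar_prod_def atLeast0LessThan intro!: sum.cong)
  also have "\<dots> = (\<Sum>i<m. \<Sum>c<n. \<Sum>j<k. D $$ (i,j) * (X $$ (i,c) * G $$ (j,c)))"
    by (simp add: sum_distrib_left algebra_simps)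
  also have "\<dots> = (\<Sum>i<m. \<Sum>j<k. \<Sum>c<n. D $$ (i,j) * (X $$ (i,c) * G $$ (j,c)))"
    by (intro sum.cong refl sum.swap)
  also have "\<dots> = (\<Sum>i<m. \<Sum>j<k. (\<Sum>c<n. X $$ (i,c) * G $$ (j,c)) * D $$ (i,j))"
    by (simp add: sum_distrib_left algebra_simps)
  also have "\<dots> = frobenius_inner (X * transpose_mat G) D" using X D G
      by (auto simp: frobenius_inner_def scalar_prod_def atLeast0LessThan intro!: sum.cong)
  finally show ?thesis .
qed

lemma sq_index_le_frobenius_sq: assumes X: "X \<in> carrier_mat m n" and i: "i < m" and j: "j < n"
  shows "(X $$ (i,j))^2 \<le> frobenius_sq X"
proof -
  have "(X $$ (i,j))^2 \<le> (\<Sum>c<n. (X $$ (i,c))^2)"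
    by (rule member_le_sum[of j "{..<n}" "\<lambda>c. (X $$ (i,c))^2"]) (use j in auto)
  also have "\<dots> \<le> (\<Sum>r<m. \<Sum>c<n. (X $$ (r,c))^2)"
    by (rule member_le_sum[of i "{..<m}" "\<lambda>r. \<Sum>c<n. (X $$ (r,c))^2"]) (use i in \<open>auto intro: sum_nonneg\<close>)
  finally show ?thesis using X by (simp add: frobenius_sq_def)
qed

lemma sq_norm_vec_minus: assumes a: "a \<in> carrier_vec n" and b: "b \<in> carrier_vec n"
  shows "sq_norm_vec (a - b) = sq_norm_vec a - 2 * scalar_prod a b + sq_norm_vec b"
proof -
  have "sq_norm_vec (a - b) = scalar_prod a (a - b) - scalar_prod b (a - b)"
    unfolding sq_norm_vec_def by (rule minus_scalar_prod_distrib[of _ n]) (use a b in auto)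
  also have "scalar_prod a (a - b) = scalar_prod a a - scalar_prod a b"
    by (rule scalar_prod_minus_distrib[of _ n]) (use a b in auto)
  also have "scalar_prod b (a - b) = scalar_prod b a - scalar_prod b b"
    by (rule scalar_prod_minus_distrib[of _ n]) (use a b in auto)
  also have "scalar_prod b a = scalar_prod a b" by (rule comm_scalar_prod[OF b a])
  finally show ?thesis by (simp add: sq_norm_vec_def)
qed

lemma two_mult_le_eps_sum: fixes t a b e :: real
  assumes "t^2 \<le> a * b" "0 \<le> a" "0 \<le> b" "0 < e"
  shows "2 * t \<le> e * a + b / e"
proof -
  have "0 \<le> (e * a - b / e)^2" by simp
  hence "4 * (a * b) \<le> (e * a + b / e)^2" using assms(4)
    by (simp add: power2_eq_square field_simps)
  hence "(2 * t)^2 \<le> (e * a + b / e)^2" using assms(1) by (simp add: power2_eq_square)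
  moreover have "0 \<le> e * a + b / e" using assms by simp
  ultimately have "\<bar>2 * t\<bar> \<le> e * a + b / e" using abs_le_square_iff
    by (metis abs_of_nonneg)
  thus ?thesis by simp
qed

lemma sq_norm_mult_mat_vec_perturb: fixes X :: "real mat"
  assumes X: "X \<in> carrier_mat m n" and x: "x \<in> carrier_vec n" and y: "y \<in> carrier_vec n"
    and e: "0 < e"
  shows "sq_norm_vec (X *\<^sub>v x) \<le> (1 + e) * sq_norm_vec (X *\<^sub>v y) + (1 + 1 / e) * frobenius_sq X * sq_norm_vec (x - y)"
proof -
  define w where "w = X *\<^sub>v x"
  define p where "p = X *\<^sub>v y"
  define q where "q = X *\<^sub>v (x - y)"
  have w: "w \<in> carrier_vec m" and p: "p \<in> carrier_vec m" using X x y
    by (auto simp: w_def p_def)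
  have qe: "q = w - p" unfolding q_def w_def p_def by (rule mult_minus_distrib_mat_vec[OF X x y])
  have q: "q \<in> carrier_vec m" using qe w p by simp
  have f1: "sq_norm_vec q = sq_norm_vec w - 2 * scalar_prod w p + sq_norm_vec p" unfolding qe
    by (rule sq_norm_vec_minus[OF w p])
  have f2: "scalar_prod q p = scalar_prod w p - sq_norm_vec p"
    unfolding qe sq_norm_vec_def by (rule minus_scalar_prod_distrib[of _ m]) (use w p in auto)
  have cs: "(scalar_prod q p)^2 \<le> sq_norm_vec p * sq_norm_vec q"
    using scalar_prod_Cauchy_Schwarz[OF q p] by (simp add: mult.commute)
  have f3: "2 * scalar_prod q p \<le> e * sq_norm_vec p + sq_norm_vec q / e"
    by (rule two_mult_le_eps_sum[OF cs sq_norm_vec_nonneg sq_norm_vec_nonneg e])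
  have f4: "sq_norm_vec q \<le> frobenius_sq X * sq_norm_vec (x - y)" unfolding q_def
    by (rule sq_norm_mult_mat_vec_le[OF X]) (use x y in simp)
  have "sq_norm_vec w = sq_norm_vec q + 2 * scalar_prod q p + sq_norm_vec p" using f1 f2 by simp
  also have "\<dots> \<le> (1 + e) * sq_norm_vec p + (1 + 1 / e) * sq_norm_vec q"
    using f3 by (simp add: algebra_simps)
  also have "\<dots> \<le> (1 + e) * sq_norm_vec p + (1 + 1 / e) * (frobenius_sq X * sq_norm_vec (x - y))"
    using f4 e by (intro add_left_mono mult_left_mono) auto
  finally show ?thesis unfolding w_def p_def by (simp add: mult.assoc)
qed

section \<open>The resolvent of a Gram matrix\<close>

locale gram_resolvent =
  fixes Tm :: "real mat" and m n :: nat
  assumes Tm: "Tm \<in> carrier_mat m n" and npos: "0 < n"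
begin

definition gram where "gram = transpose_mat Tm * Tm"
definition rayleigh where "rayleigh = {sq_norm_vec (Tm *\<^sub>v x) | x. x \<in> carrier_vec n \<and> sq_norm_vec x = 1}"
definition lam_max where "lam_max = Sup rayleigh"
definition shift where "shift g = g \<cdot>\<^sub>m 1\<^sub>m n - gram"
definition res where "res g = the (mat_inverse (shift g))"

lemma gram_carrier[simp]: "gram \<in> carrier_mat n n"
  using Tm by (simp add: gram_def)

lemma shift_carrier[simp]: "shift g \<in> carrier_mat n n"
  unfolding shift_def by (rule minus_carrier_mat[OF gram_carrier])

lemma dim_gram[simp]: "dim_row gram = n" "dim_col gram = n"
  and dim_shift[simp]: "dim_row (shift g) = n" "dim_col (shift g) = n"
  using carrier_matD[OF gram_carrier] carrier_matD[OF shift_carrier] by auto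

lemma gram_mult_vec_carrier[simp]: "x \<in> carrier_vec n \<Longrightarrow> gram *\<^sub>v x \<in> carrier_vec n"
  and shift_mult_vec_carrier[simp]: "x \<in> carrier_vec n \<Longrightarrow> shift g *\<^sub>v x \<in> carrier_vec n"
  by (rule mult_mat_vec_carrier[OF gram_carrier], assumption)
    (rule mult_mat_vec_carrier[OF shift_carrier], assumption)

lemma gram_sym: "transpose_mat gram = gram"
  using Tm by (simp add: gram_def transpose_mult[of _ n m _ n])

lemma shift_sym: "transpose_mat (shift g) = shift g"
proof (rule eq_matI)
  fix i j assume "i < dim_row (shift g)" "j < dim_col (shift g)"
  hence ij: "i < n" "j < n" by auto
  have "gram $$ (j, i) = gram $$ (i, j)" using arg_cong[OF gram_sym, of "\<lambda>X. X $$ (i,j)"] ij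
    by simp
  thus "transpose_mat (shift g) $$ (i, j) = shift g $$ (i, j)" using ij by (auto simp: shift_def)
qed auto

lemma shift_mult_vec:
  assumes x: "x \<in> carrier_vec n" shows "shift g *\<^sub>v x = g \<cdot>\<^sub>v x - gram *\<^sub>v x"
proof -
  have "shift g *\<^sub>v x = (g \<cdot>\<^sub>m 1\<^sub>m n) *\<^sub>v x - gram *\<^sub>v x"
    unfolding shift_def by (rule minus_mult_distrib_mat_vec[OF _ _ x]) auto
  moreover have "(g \<cdot>\<^sub>m 1\<^sub>m n) *\<^sub>v x = g \<cdot>\<^sub>v x"
  proof (rule eq_vecI)
    fix i assume "i < dim_vec (g \<cdot>\<^sub>v x)"
    hence i: "i < n" using x by simp
    have "Matrix.row (g \<cdot>\<^sub>m 1\<^sub>m n) i = g \<cdot>\<^sub>v unit_vec n i"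
      by (rule eq_vecI) (use i in auto)
    hence "((g \<cdot>\<^sub>m 1\<^sub>m n) *\<^sub>v x) $ i = g * scalar_prod (unit_vec n i) x"
      using i x by simp
    also have "\<dots> = g * x $ i" using i x by simp
    finally show "((g \<cdot>\<^sub>m 1\<^sub>m n) *\<^sub>v x) $ i = (g \<cdot>\<^sub>v x) $ i"
      using i x by simp
  qed (use x in auto)
  ultimately show ?thesis by simp
qed

lemma quadratic_gram: "x \<in> carrier_vec n \<Longrightarrow> scalar_prod x (gram *\<^sub>v x) = sq_norm_vec (Tm *\<^sub>v x)"
  unfolding gram_def by (rule scalar_prod_transpose_mult_self[OF Tm])

lemma quadratic_shift: assumes x: "x \<in> carrier_vec n"
  shows "scalar_prod x (shift g *\<^sub>v x) = g * sq_norm_vec x - sq_norm_vec (Tm *\<^sub>v x)"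
proof -
  have "scalar_prod x (shift g *\<^sub>v x) = scalar_prod x (g \<cdot>\<^sub>v x) - scalar_prod x (gram *\<^sub>v x)"
    unfolding shift_mult_vec[OF x] by (rule scalar_prod_minus_distrib[of _ n]) (use x in auto)
  thus ?thesis using quadratic_gram[OF x] x by (simp add: sq_norm_vec_def)
qed

lemma rayleigh_nonempty: "rayleigh \<noteq> {}"
proof -
  have "sq_norm_vec (unit_vec n 0) = 1" using npos by (simp add: sq_norm_vec_def)
  thus ?thesis unfolding rayleigh_def by (auto intro!: exI[of _ "unit_vec n 0"])
qed

lemma rayleigh_bdd_above: "bdd_above rayleigh"
proof -
  have "s \<le> frobenius_sq Tm" if "s \<in> rayleigh" for s
  proof -
    from that obtain x where x: "x \<in> carrier_vec n" "sq_norm_vec x = 1" "s = sq_norm_vec (Tm *\<^sub>v x)"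
      unfolding rayleigh_def by auto
    thus ?thesis using sq_norm_mult_mat_vec_le[OF Tm x(1)] by simp
  qed
  thus ?thesis by (auto simp: bdd_above_def)
qed

lemma rayleigh_le_lam_max: "s \<in> rayleigh \<Longrightarrow> s \<le> lam_max"
  unfolding lam_max_def using rayleigh_bdd_above by (auto intro: cSup_upper)

lemma sq_norm_le_lam_max:
  assumes x: "x \<in> carrier_vec n" shows "sq_norm_vec (Tm *\<^sub>v x) \<le> lam_max * sq_norm_vec x"
proof (cases "sq_norm_vec x = 0")
  case True
  hence "x = 0\<^sub>v n" using sq_norm_vec_eq_zeroD x by blast
  moreover have "Tm *\<^sub>v 0\<^sub>v n = 0\<^sub>v m" by (rule eq_vecI) (use Tm in auto)
  ultimately show ?thesis by (simp add: sq_norm_vec_def)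
next
  case False
  hence pos: "sq_norm_vec x > 0" using sq_norm_vec_nonneg[of x] by simp
  define c where "c = 1 / sqrt (sq_norm_vec x)"
  have c2: "c^2 = 1 / sq_norm_vec x" unfolding c_def using pos by (simp add: power_divide)
  have y: "c \<cdot>\<^sub>v x \<in> carrier_vec n" using x by simp
  have "sq_norm_vec (c \<cdot>\<^sub>v x) = 1" using c2 pos by (simp add: sq_norm_vec_smult)
  hence "sq_norm_vec (Tm *\<^sub>v (c \<cdot>\<^sub>v x)) \<in> rayleigh" unfolding rayleigh_def
    using y by blast
  hence "sq_norm_vec (Tm *\<^sub>v (c \<cdot>\<^sub>v x)) \<le> lam_max"
    by (rule rayleigh_le_lam_max)
  moreover have "Tm *\<^sub>v (c \<cdot>\<^sub>v x) = c \<cdot>\<^sub>v (Tm *\<^sub>v x)"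
    by (rule mult_mat_vec[OF Tm x])
  ultimately have "c^2 * sq_norm_vec (Tm *\<^sub>v x) \<le> lam_max"
    by (simp add: sq_norm_vec_smult)
  hence "sq_norm_vec (Tm *\<^sub>v x) / sq_norm_vec x \<le> lam_max" using c2 by simp
  thus ?thesis using pos by (simp add: field_simps)
qed

lemma lam_max_nonneg: "0 \<le> lam_max"
proof -
  obtain s where "s \<in> rayleigh" using rayleigh_nonempty by auto
  moreover have "0 \<le> s" using \<open>s \<in> rayleigh\<close> unfolding rayleigh_def
    by (auto simp: sq_norm_vec_nonneg)
  ultimately show ?thesis using rayleigh_le_lam_max by fastforce
qed

lemma lam_max_pos: assumes nz: "Tm \<noteq> 0\<^sub>m m n" shows "0 < lam_max"
proof -
  obtain i j where ij: "i < m" "j < n" "Tm $$ (i,j) \<noteq> 0"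
    by (rule mat_nonzero_index[OF Tm nz])
  have e: "unit_vec n j \<in> carrier_vec n" "sq_norm_vec (unit_vec n j) = 1" using ij
    by (auto simp: sq_norm_vec_def)
  have "Tm *\<^sub>v unit_vec n j = col Tm j" by (rule eq_vecI) (use Tm ij in auto)
  hence "(Tm $$ (i,j))^2 \<le> sq_norm_vec (Tm *\<^sub>v unit_vec n j)"
    using sq_index_le_sq_norm_vec[of "col Tm j" m i] Tm ij by auto
  moreover have "sq_norm_vec (Tm *\<^sub>v unit_vec n j) \<le> lam_max" using e
    by (intro rayleigh_le_lam_max) (auto simp: rayleigh_def)
  moreover have "0 < (Tm $$ (i,j))^2" using ij by simp
  ultimately show ?thesis by linarith
qed

lemma lam_max_approx: assumes "d > 0"
  shows "\<exists>u \<in> carrier_vec n. sq_norm_vec u = 1 \<and> lam_max - d < sq_norm_vec (Tm *\<^sub>v u)"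
proof -
  have "lam_max - d < Sup rayleigh" using assms lam_max_def by simp
  then obtain s where "s \<in> rayleigh" "lam_max - d < s" using less_cSupE[OF _ rayleigh_nonempty]
    by blast
  thus ?thesis unfolding rayleigh_def by auto
qed

lemma quadratic_shift_ge: assumes g: "g > lam_max" and x: "x \<in> carrier_vec n"
  shows "(g - lam_max) * sq_norm_vec x \<le> scalar_prod x (shift g *\<^sub>v x)"
  using quadratic_shift[OF x, of g] sq_norm_le_lam_max[OF x] by (simp add: algebra_simps)

lemma quadratic_shift_nonneg: "g > lam_max \<Longrightarrow> x \<in> carrier_vec n \<Longrightarrow> 0 \<le> scalar_prod x (shift g *\<^sub>v x)"
proof -
  assume g: "g > lam_max" and x: "x \<in> carrier_vec n"
  have "0 \<le> (g - lam_max) * sq_norm_vec x" using g sq_norm_vec_nonneg[of x] by simp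
  thus ?thesis using quadratic_shift_ge[OF g x] by linarith
qed

lemma res_inverse: assumes g: "g > lam_max"
  shows "res g \<in> carrier_mat n n \<and> shift g * res g = 1\<^sub>m n \<and> res g * shift g = 1\<^sub>m n"
proof -
  have "v = 0\<^sub>v n" if v: "v \<in> carrier_vec n" "shift g *\<^sub>v v = 0\<^sub>v n" for v
  proof -
    have "(g - lam_max) * sq_norm_vec v \<le> 0" using quadratic_shift_ge[OF g v(1)] v by simp
    hence "sq_norm_vec v = 0" using g sq_norm_vec_nonneg[of v] by (simp add: mult_le_0_iff)
    thus ?thesis by (rule sq_norm_vec_eq_zeroD[OF v(1)])
  qed
  thus ?thesis using mat_inverse_of_trivial_kernel[OF shift_carrier] unfolding res_def by blast
qed

lemma res_carrier: "g > lam_max \<Longrightarrow> res g \<in> carrier_mat n n"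
  using res_inverse by blast

lemma dim_res[simp]: "g > lam_max \<Longrightarrow> dim_row (res g) = n" "g > lam_max \<Longrightarrow> dim_col (res g) = n"
  using carrier_matD[OF res_carrier] by auto

lemma shift_res_vec: assumes g: "g > lam_max" and y: "y \<in> carrier_vec n"
  shows "shift g *\<^sub>v (res g *\<^sub>v y) = y"
proof -
  have "shift g *\<^sub>v (res g *\<^sub>v y) = (shift g * res g) *\<^sub>v y"
    by (rule assoc_mult_mat_vec[symmetric, of _ n n _ n]) (use res_inverse[OF g] y in auto)
  thus ?thesis using res_inverse[OF g] y by simp
qed

lemma res_shift_vec: assumes g: "g > lam_max" and y: "y \<in> carrier_vec n"
  shows "res g *\<^sub>v (shift g *\<^sub>v y) = y"
proof -
  have "res g *\<^sub>v (shift g *\<^sub>v y) = (res g * shift g) *\<^sub>v y"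
    by (rule assoc_mult_mat_vec[symmetric, of _ n n _ n]) (use res_inverse[OF g] y in auto)
  thus ?thesis using res_inverse[OF g] y by simp
qed

lemma res_sym: assumes g: "g > lam_max" shows "transpose_mat (res g) = res g"
proof -
  have res: "res g \<in> carrier_mat n n" and PR: "shift g * res g = 1\<^sub>m n" and RP: "res g * shift g = 1\<^sub>m n"
    using res_inverse[OF g] by auto
  have "transpose_mat (res g) * shift g = transpose_mat (transpose_mat (shift g) * res g)"
    using res by (simp add: transpose_mult[of _ n n _ n])
  also have "\<dots> = 1\<^sub>m n" using PR shift_sym by simp
  finally have X: "transpose_mat (res g) * shift g = 1\<^sub>m n" .
  have "transpose_mat (res g) = transpose_mat (res g) * (shift g * res g)" using PR res by simp
  also have "\<dots> = (transpose_mat (res g) * shift g) * res g" using res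
    by (simp add: assoc_mult_mat[of _ n n _ n _ n])
  also have "\<dots> = res g" using X res by simp
  finally show ?thesis .
qed

lemma res_bound: assumes g: "g > lam_max" and y: "y \<in> carrier_vec n"
  shows "(g - lam_max)^2 * sq_norm_vec (res g *\<^sub>v y) \<le> sq_norm_vec y"
proof -
  define x where "x = res g *\<^sub>v y"
  have x: "x \<in> carrier_vec n" unfolding x_def using res_carrier[OF g] y by simp
  have Px: "shift g *\<^sub>v x = y" unfolding x_def by (rule shift_res_vec[OF g y])
  have a: "(g - lam_max) * sq_norm_vec x \<le> scalar_prod x y" using quadratic_shift_ge[OF g x] Px
    by simp
  have b: "(scalar_prod x y)^2 \<le> sq_norm_vec x * sq_norm_vec y"
    by (rule scalar_prod_Cauchy_Schwarz[OF x y])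
  have c: "0 \<le> (g - lam_max) * sq_norm_vec x" using g sq_norm_vec_nonneg[of x] by simp
  have "((g - lam_max) * sq_norm_vec x)^2 \<le> (scalar_prod x y)^2" using a c
    by (intro power_mono) auto
  hence "(g - lam_max)^2 * sq_norm_vec x * sq_norm_vec x \<le> sq_norm_vec x * sq_norm_vec y"
    using b by (simp add: power2_eq_square algebra_simps)
  hence "sq_norm_vec x * ((g - lam_max)^2 * sq_norm_vec x) \<le> sq_norm_vec x * sq_norm_vec y"
    by (simp add: algebra_simps)
  thus ?thesis using sq_norm_vec_nonneg[of x] unfolding x_def[symmetric]
    by (cases "sq_norm_vec x = 0") (simp_all add: sq_norm_vec_nonneg mult_le_cancel_left)
qed

lemma resolvent_identity:
  assumes g: "g > lam_max" and h: "h > lam_max" and c: "c \<in> carrier_vec n"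
  shows "res g *\<^sub>v c - res h *\<^sub>v c = (h - g) \<cdot>\<^sub>v (res g *\<^sub>v (res h *\<^sub>v c))"
proof -
  define w where "w = res h *\<^sub>v c"
  have w: "w \<in> carrier_vec n" unfolding w_def using res_carrier[OF h] c by simp
  have Rg: "res g \<in> carrier_mat n n" by (rule res_carrier[OF g])
  have 1: "res g *\<^sub>v c = res g *\<^sub>v (shift h *\<^sub>v w)" unfolding w_def
    using shift_res_vec[OF h c] by simp
  have 2: "w = res g *\<^sub>v (shift g *\<^sub>v w)" using res_shift_vec[OF g w] by simp
  have "res g *\<^sub>v c - w = res g *\<^sub>v (shift h *\<^sub>v w) - res g *\<^sub>v (shift g *\<^sub>v w)"
    using 1 2 by simp
  also have "\<dots> = res g *\<^sub>v (shift h *\<^sub>v w - shift g *\<^sub>v w)"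
    by (rule mult_minus_distrib_mat_vec[OF Rg, symmetric]) (use w in auto)
  also have "shift h *\<^sub>v w - shift g *\<^sub>v w = (h - g) \<cdot>\<^sub>v w"
    unfolding shift_mult_vec[OF w]
    by (rule eq_vecI) (use w gram_mult_vec_carrier[OF w] in \<open>auto simp: algebra_simps\<close>)
  also have "res g *\<^sub>v ((h - g) \<cdot>\<^sub>v w) = (h - g) \<cdot>\<^sub>v (res g *\<^sub>v w)"
    by (rule mult_mat_vec[OF Rg w])
  finally show ?thesis unfolding w_def .
qed

text \<open>Since res g * gram = g res g - I (lemma res_gram), this is the cost E |A xi - xi|^2 of
  transporting an identity-covariance distribution along the map A = g res g.\<close>

definition transport_cost where "transport_cost g = frobenius_sq (res g * gram)"

lemma transport_cost_cols:
  assumes g: "g > lam_max" shows "transport_cost g = (\<Sum>j<n. sq_norm_vec (res g *\<^sub>v col gram j))"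
proof -
  have "res g * gram \<in> carrier_mat n n" using res_carrier[OF g] by simp
  hence "transport_cost g = (\<Sum>j<n. sq_norm_vec (col (res g * gram) j))"
    unfolding transport_cost_def by (rule frobenius_sq_cols)
  also have "\<dots> = (\<Sum>j<n. sq_norm_vec (res g *\<^sub>v col gram j))"
    by (rule sum.cong) (use res_carrier[OF g] gram_carrier in \<open>auto simp: col_mult2[OF res_carrier[OF g] gram_carrier]\<close>)
  finally show ?thesis .
qed

lemma transport_cost_upper:
  assumes g: "g > lam_max" shows "(g - lam_max)^2 * transport_cost g \<le> frobenius_sq gram"
proof -
  have "(g - lam_max)^2 * transport_cost g = (\<Sum>j<n. (g - lam_max)^2 * sq_norm_vec (res g *\<^sub>v col gram j))"
    by (simp add: transport_cost_cols[OF g] sum_distrib_left)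
  also have "\<dots> \<le> (\<Sum>j<n. sq_norm_vec (col gram j))"
    by (rule sum_mono, rule res_bound[OF g]) auto
  also have "\<dots> = frobenius_sq gram" by (rule frobenius_sq_cols[symmetric]) (rule gram_carrier)
  finally show ?thesis .
qed

lemma res_gram:
  assumes g: "g > lam_max" shows "res g * gram = g \<cdot>\<^sub>m res g - 1\<^sub>m n"
proof -
  have res: "res g \<in> carrier_mat n n" and RP: "res g * shift g = 1\<^sub>m n"
    using res_inverse[OF g] by auto
  have Meq: "gram = g \<cdot>\<^sub>m 1\<^sub>m n - shift g" unfolding shift_def
    by (rule eq_matI) auto
  have "res g * gram = res g * (g \<cdot>\<^sub>m 1\<^sub>m n) - res g * shift g"
    unfolding Meq by (rule mult_minus_distrib_mat[OF res]) auto
  also have "res g * (g \<cdot>\<^sub>m 1\<^sub>m n) = g \<cdot>\<^sub>m res g" using res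
    by (subst mult_smult_distrib[of _ n n]) auto
  finally show ?thesis using RP by simp
qed

lemma transport_cost_lower:
  assumes g: "g > lam_max" and u: "u \<in> carrier_vec n" "sq_norm_vec u = 1"
  shows "(g * scalar_prod u (res g *\<^sub>v u) - 1)^2 \<le> transport_cost g"
proof -
  have res: "res g \<in> carrier_mat n n" by (rule res_carrier[OF g])
  define v where "v = (res g * gram) *\<^sub>v u"
  have v: "v \<in> carrier_vec n" unfolding v_def using mult_carrier_mat[OF res gram_carrier] u
    by simp
  have "sq_norm_vec v \<le> transport_cost g"
    using sq_norm_mult_mat_vec_le[of "res g * gram" n n u] res u unfolding transport_cost_def v_def
    by (simp add: mult_carrier_mat[OF res gram_carrier])
  have veq: "v = g \<cdot>\<^sub>v (res g *\<^sub>v u) - u"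
  proof -
    have "v = (g \<cdot>\<^sub>m res g - 1\<^sub>m n) *\<^sub>v u" unfolding v_def res_gram[OF g] ..
    also have "\<dots> = (g \<cdot>\<^sub>m res g) *\<^sub>v u - 1\<^sub>m n *\<^sub>v u"
      by (rule minus_mult_distrib_mat_vec) (use res u in auto)
    also have "(g \<cdot>\<^sub>m res g) *\<^sub>v u = g \<cdot>\<^sub>v (res g *\<^sub>v u)"
      by (rule eq_vecI) (use res u in \<open>auto simp: scalar_prod_def sum_distrib_left algebra_simps\<close>)
    finally show ?thesis using u by simp
  qed
  have "scalar_prod v u = g * scalar_prod (res g *\<^sub>v u) u - scalar_prod u u"
    unfolding veq by (subst minus_scalar_prod_distrib[of _ n]) (use res u in auto)
  also have "scalar_prod (res g *\<^sub>v u) u = scalar_prod u (res g *\<^sub>v u)"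
    by (rule comm_scalar_prod[where n = n]) (use res u in auto)
  finally have "scalar_prod v u = g * scalar_prod u (res g *\<^sub>v u) - 1" using u
    by (simp add: sq_norm_vec_def)
  moreover have "(scalar_prod v u)^2 \<le> sq_norm_vec v * sq_norm_vec u"
    by (rule scalar_prod_Cauchy_Schwarz[OF v u(1)])
  ultimately show ?thesis using \<open>sq_norm_vec v \<le> transport_cost g\<close> u by simp
qed

lemma shift_Cauchy_Schwarz:
  assumes g: "g > lam_max" and a: "a \<in> carrier_vec n" and b: "b \<in> carrier_vec n"
  shows "(scalar_prod a (shift g *\<^sub>v b))^2 \<le> scalar_prod a (shift g *\<^sub>v a) * scalar_prod b (shift g *\<^sub>v b)"
proof (rule quadratic_nonneg_discriminant)
  fix t :: real
  have ab: "a + t \<cdot>\<^sub>v b \<in> carrier_vec n" using a b by simp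
  have Pa: "shift g *\<^sub>v a \<in> carrier_vec n" and Pb: "shift g *\<^sub>v b \<in> carrier_vec n"
    using a b by auto
  have e: "shift g *\<^sub>v (a + t \<cdot>\<^sub>v b) = shift g *\<^sub>v a + t \<cdot>\<^sub>v (shift g *\<^sub>v b)"
    using a b by (simp add: mult_add_distrib_mat_vec[of _ n n] mult_mat_vec[of _ n n])
  have s: "scalar_prod b (shift g *\<^sub>v a) = scalar_prod a (shift g *\<^sub>v b)"
    by (rule scalar_prod_sym_mat_swap[OF shift_carrier shift_sym b a])
  have "0 \<le> scalar_prod (a + t \<cdot>\<^sub>v b) (shift g *\<^sub>v (a + t \<cdot>\<^sub>v b))"
    by (rule quadratic_shift_nonneg[OF g ab])
  also have "\<dots> = scalar_prod a (shift g *\<^sub>v a) + 2 * scalar_prod a (shift g *\<^sub>v b) * t + scalar_prod b (shift g *\<^sub>v b) * t^2"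
    unfolding e using a b Pa Pb s
    by (simp add: add_scalar_prod_distrib[of _ n] scalar_prod_add_distrib[of _ n] power2_eq_square algebra_simps)
  finally show "0 \<le> scalar_prod a (shift g *\<^sub>v a) + 2 * scalar_prod a (shift g *\<^sub>v b) * t + scalar_prod b (shift g *\<^sub>v b) * t^2" .
qed

lemma quadratic_shift_res_ge:
  assumes g: "g > lam_max" and u: "u \<in> carrier_vec n" "sq_norm_vec u = 1"
  shows "1 \<le> scalar_prod u (shift g *\<^sub>v u) * scalar_prod u (res g *\<^sub>v u)"
proof -
  have res: "res g \<in> carrier_mat n n" by (rule res_carrier[OF g])
  have b: "res g *\<^sub>v u \<in> carrier_vec n" using res u by simp
  have 1: "scalar_prod u (shift g *\<^sub>v (res g *\<^sub>v u)) = 1"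
    using shift_res_vec[OF g u(1)] u by (simp add: sq_norm_vec_def)
  have 2: "scalar_prod (res g *\<^sub>v u) (shift g *\<^sub>v (res g *\<^sub>v u)) = scalar_prod u (res g *\<^sub>v u)"
    using shift_res_vec[OF g u(1)] by (simp add: comm_scalar_prod[OF b u(1)])
  show ?thesis using shift_Cauchy_Schwarz[OF g u(1) b] 1 2 by simp
qed

lemma res_bound_uniform: assumes a: "lam_max < a" and g: "a \<le> g" and y: "y \<in> carrier_vec n"
  shows "sq_norm_vec (res g *\<^sub>v y) \<le> sq_norm_vec y / (a - lam_max)^2"
proof -
  have g': "g > lam_max" using a g by simp
  have "(a - lam_max)^2 \<le> (g - lam_max)^2" using a g by (intro power_mono) auto
  hence "(a - lam_max)^2 * sq_norm_vec (res g *\<^sub>v y) \<le> (g - lam_max)^2 * sq_norm_vec (res g *\<^sub>v y)"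
    by (intro mult_right_mono) (auto simp: sq_norm_vec_nonneg)
  also have "\<dots> \<le> sq_norm_vec y" by (rule res_bound[OF g' y])
  finally show ?thesis using a by (simp add: field_simps)
qed

lemma res_index_lipschitz: assumes a: "lam_max < a" and c: "c \<in> carrier_vec n" and i: "i < n"
  shows "(sqrt (sq_norm_vec c) / (a - lam_max)^2)-lipschitz_on {a..b} (\<lambda>g. (res g *\<^sub>v c) $ i)"
proof (rule lipschitz_onI)
  show "0 \<le> sqrt (sq_norm_vec c) / (a - lam_max)^2" by (simp add: sq_norm_vec_nonneg)
next
  fix g h assume gh: "g \<in> {a..b}" "h \<in> {a..b}"
  have g: "g > lam_max" "a \<le> g" and h: "h > lam_max" "a \<le> h" using gh a by auto
  have Rh: "res h *\<^sub>v c \<in> carrier_vec n" using res_carrier[OF h(1)] c by simp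
  have Rg: "res g *\<^sub>v (res h *\<^sub>v c) \<in> carrier_vec n" using res_carrier[OF g(1)] Rh
    by simp
  have Rgc: "res g *\<^sub>v c \<in> carrier_vec n" using res_carrier[OF g(1)] c by simp
  have "(res g *\<^sub>v c) $ i - (res h *\<^sub>v c) $ i = (res g *\<^sub>v c - res h *\<^sub>v c) $ i"
    using i g h by simp
  also have "\<dots> = (h - g) * (res g *\<^sub>v (res h *\<^sub>v c)) $ i"
    unfolding resolvent_identity[OF g(1) h(1) c] using i g h by simp
  finally have eq: "dist ((res g *\<^sub>v c) $ i) ((res h *\<^sub>v c) $ i) = \<bar>h - g\<bar> * \<bar>(res g *\<^sub>v (res h *\<^sub>v c)) $ i\<bar>"
    by (simp add: dist_real_def abs_mult)
  have "sq_norm_vec (res g *\<^sub>v (res h *\<^sub>v c)) \<le> sq_norm_vec (res h *\<^sub>v c) / (a - lam_max)^2"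
    by (rule res_bound_uniform[OF a g(2) Rh])
  also have "\<dots> \<le> (sq_norm_vec c / (a - lam_max)^2) / (a - lam_max)^2"
    by (intro divide_right_mono res_bound_uniform[OF a h(2) c]) auto
  also have "\<dots> = (sqrt (sq_norm_vec c) / (a - lam_max)^2)^2"
    using a by (simp add: power_divide sq_norm_vec_nonneg power2_eq_square)
  finally have "sqrt (sq_norm_vec (res g *\<^sub>v (res h *\<^sub>v c))) \<le> sqrt (sq_norm_vec c) / (a - lam_max)^2"
    using real_sqrt_le_mono
    by (metis abs_of_nonneg divide_nonneg_nonneg sq_norm_vec_nonneg real_sqrt_abs real_sqrt_ge_zero zero_le_power2)
  hence "\<bar>(res g *\<^sub>v (res h *\<^sub>v c)) $ i\<bar> \<le> sqrt (sq_norm_vec c) / (a - lam_max)^2"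
    using abs_index_le_sq_norm_vec[OF Rg i] by linarith
  hence "\<bar>h - g\<bar> * \<bar>(res g *\<^sub>v (res h *\<^sub>v c)) $ i\<bar> \<le> \<bar>h - g\<bar> * (sqrt (sq_norm_vec c) / (a - lam_max)^2)"
    by (intro mult_left_mono) auto
  show "dist ((res g *\<^sub>v c) $ i) ((res h *\<^sub>v c) $ i) \<le> sqrt (sq_norm_vec c) / (a - lam_max)^2 * dist g h"
  proof -
    have "\<bar>h - g\<bar> * (sqrt (sq_norm_vec c) / (a - lam_max)^2) = sqrt (sq_norm_vec c) / (a - lam_max)^2 * dist g h"
      by (simp add: dist_real_def abs_minus_commute)
    thus ?thesis unfolding eq
      using \<open>\<bar>h - g\<bar> * \<bar>(res g *\<^sub>v (res h *\<^sub>v c)) $ i\<bar> \<le> _\<close>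
      by linarith
  qed
qed

lemma transport_cost_continuous:
  assumes a: "lam_max < a" shows "continuous_on {a..b} transport_cost"
proof -
  have eq: "transport_cost g = (\<Sum>j<n. \<Sum>i<n. ((res g *\<^sub>v col gram j) $ i)^2)" if "g \<in> {a..b}" for g
  proof -
    have g: "g > lam_max" using that a by auto
    show ?thesis unfolding transport_cost_cols[OF g]
      by (rule sum.cong[OF refl], rule sq_norm_vec_sum) (use res_carrier[OF g] in auto)
  qed
  have ce: "continuous_on {a..b} transport_cost = continuous_on {a..b} (\<lambda>g. \<Sum>j<n. \<Sum>i<n. ((res g *\<^sub>v col gram j) $ i)^2)"
    by (rule continuous_on_cong[OF refl eq])
  have "continuous_on {a..b} (\<lambda>g. \<Sum>j<n. \<Sum>i<n. ((res g *\<^sub>v col gram j) $ i)^2)"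
  proof (intro continuous_on_sum continuous_on_power)
    fix i j assume "i \<in> {..<n}" "j \<in> {..<n}"
    hence "col gram j \<in> carrier_vec n" "i < n" by auto
    from lipschitz_on_continuous_on[OF res_index_lipschitz[OF a this]]
    show "continuous_on {a..b} (\<lambda>g. (res g *\<^sub>v col gram j) $ i)" .
  qed
  thus ?thesis using ce by simp
qed

lemma transport_cost_large: assumes nz: "Tm \<noteq> 0\<^sub>m m n" and rho: "0 \<le> \<rho>"
  shows "\<exists>g > lam_max. \<rho>^2 \<le> transport_cost g"
proof -
  have lp: "lam_max > 0" by (rule lam_max_pos[OF nz])
  define d where "d = lam_max / (2 * (\<rho> + 1))"
  have d: "d > 0" unfolding d_def using lp rho by simp
  define g where "g = lam_max + d"
  have g: "g > lam_max" unfolding g_def using d by simp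
  obtain u where u: "u \<in> carrier_vec n" "sq_norm_vec u = 1" "lam_max - d < sq_norm_vec (Tm *\<^sub>v u)"
    using lam_max_approx[OF d] by blast
  \<comment> \<open>For an almost maximising unit vector u, u \<bullet> shift g u < 2 d forces u \<bullet> res g u > 1 / (2 d).\<close>
  have uPu: "scalar_prod u (shift g *\<^sub>v u) = g - sq_norm_vec (Tm *\<^sub>v u)"
    using quadratic_shift[OF u(1)] u(2) by simp
  have uPu1: "scalar_prod u (shift g *\<^sub>v u) < 2 * d" using uPu u(3) unfolding g_def by simp
  have uPu2: "scalar_prod u (shift g *\<^sub>v u) \<ge> d"
    using quadratic_shift_ge[OF g u(1)] u(2) unfolding g_def by simp
  have one: "1 \<le> scalar_prod u (shift g *\<^sub>v u) * scalar_prod u (res g *\<^sub>v u)"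
    by (rule quadratic_shift_res_ge[OF g u(1,2)])
  have uRu_pos: "scalar_prod u (res g *\<^sub>v u) > 0"
    using one uPu2 d by (smt (verit, best) mult_nonpos_nonneg mult_nonneg_nonpos)
  have "1 \<le> 2 * d * scalar_prod u (res g *\<^sub>v u)"
    using one uPu1 uRu_pos by (smt (verit) mult_strict_right_mono)
  hence "lam_max / (2 * d) \<le> lam_max * scalar_prod u (res g *\<^sub>v u)"
    using d lp by (simp add: field_simps)
  moreover have "lam_max / (2 * d) = \<rho> + 1" unfolding d_def using lp rho
    by (simp add: field_simps)
  moreover have "lam_max * scalar_prod u (res g *\<^sub>v u) < g * scalar_prod u (res g *\<^sub>v u)"
    using g uRu_pos by simp
  ultimately have "\<rho> < g * scalar_prod u (res g *\<^sub>v u) - 1" by simp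
  hence "\<rho>^2 < (g * scalar_prod u (res g *\<^sub>v u) - 1)^2"
    using rho by (intro power_strict_mono) auto
  also have "\<dots> \<le> transport_cost g" by (rule transport_cost_lower[OF g u(1,2)])
  finally show ?thesis using g by (intro exI[of _ g]) simp
qed

lemma transport_cost_small: assumes g1: "g1 > lam_max" and rho: "\<rho> > 0"
  shows "\<exists>g \<ge> g1. transport_cost g \<le> \<rho>^2"
proof -
  define g where "g = g1 + sqrt (frobenius_sq gram) / \<rho>"
  have g1g: "g1 \<le> g" unfolding g_def using rho by (simp add: frobenius_sq_nonneg)
  have g: "g > lam_max" using g1 g1g by simp
  have "(g - lam_max)^2 * transport_cost g \<le> frobenius_sq gram"
    by (rule transport_cost_upper[OF g])
  also have "frobenius_sq gram = \<rho>^2 * (sqrt (frobenius_sq gram) / \<rho>)^2"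
    using rho by (simp add: power_divide frobenius_sq_nonneg)
  also have "\<dots> \<le> \<rho>^2 * (g - lam_max)^2" using rho g1 unfolding g_def
      by (intro mult_left_mono power_mono) (auto simp: frobenius_sq_nonneg)
  finally have "(g - lam_max)^2 * transport_cost g \<le> (g - lam_max)^2 * \<rho>^2"
    by (simp add: mult.commute)
  hence "transport_cost g \<le> \<rho>^2" using g by (simp add: mult_le_cancel_left)
  thus ?thesis using g1g by blast
qed

lemma transport_cost_attains: assumes nz: "Tm \<noteq> 0\<^sub>m m n" and rho: "\<rho> > 0"
  shows "\<exists>g > lam_max. transport_cost g = \<rho>^2"
proof -
  obtain g1 where g1: "g1 > lam_max" and F1: "\<rho>^2 \<le> transport_cost g1"
    using transport_cost_large[OF nz less_imp_le[OF rho]] by blast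
  obtain g2 where g12: "g1 \<le> g2" and F2: "transport_cost g2 \<le> \<rho>^2"
    using transport_cost_small[OF g1 rho] by blast
  obtain g where "g1 \<le> g" "g \<le> g2" "transport_cost g = \<rho>^2"
    using IVT2'[of transport_cost g2 "\<rho>^2" g1, OF F2 F1 g12 transport_cost_continuous[OF g1]]
    by blast
  thus ?thesis using g1 by (intro exI[of _ g]) auto
qed

lemma gram_scaled_res_vec: assumes g: "g > lam_max" and y: "y \<in> carrier_vec n"
  shows "gram *\<^sub>v ((g \<cdot>\<^sub>m res g) *\<^sub>v y) = g \<cdot>\<^sub>v ((g \<cdot>\<^sub>m res g) *\<^sub>v y) - g \<cdot>\<^sub>v y"
proof -
  have Rc: "res g \<in> carrier_mat n n" by (rule res_carrier[OF g])
  define ay where "ay = (g \<cdot>\<^sub>m res g) *\<^sub>v y"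
  have ay_eq: "ay = g \<cdot>\<^sub>v (res g *\<^sub>v y)"
    unfolding ay_def
    by (rule eq_vecI) (use Rc y in \<open>auto simp: scalar_prod_def sum_distrib_left algebra_simps\<close>)
  have ay: "ay \<in> carrier_vec n" using ay_eq Rc y by simp
  have Pay: "shift g *\<^sub>v ay = g \<cdot>\<^sub>v y"
    unfolding ay_eq using shift_res_vec[OF g y] Rc y by (simp add: mult_mat_vec[OF shift_carrier])
  have "gram *\<^sub>v ay = g \<cdot>\<^sub>v ay - g \<cdot>\<^sub>v y"
  proof (rule eq_vecI)
    fix i assume "i < dim_vec (g \<cdot>\<^sub>v ay - g \<cdot>\<^sub>v y)"
    hence i: "i < n" using y by simp
    have "(shift g *\<^sub>v ay) $ i = g * ay $ i - (gram *\<^sub>v ay) $ i"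
      using shift_mult_vec[OF ay, of g] i ay by simp
    moreover have "(shift g *\<^sub>v ay) $ i = g * y $ i" using Pay i y by simp
    ultimately show "(gram *\<^sub>v ay) $ i = (g \<cdot>\<^sub>v ay - g \<cdot>\<^sub>v y) $ i"
      using i ay y by simp
  qed (use ay y in simp)
  thus ?thesis unfolding ay_def .
qed

text \<open>The difference of the two sides is g |u|^2 - |Tm u|^2 for u = x - (g res g) y, which is
  nonnegative since g exceeds the largest eigenvalue of the Gram matrix.\<close>

lemma pointwise_dual_bound:
  assumes g: "g > lam_max" and x: "x \<in> carrier_vec n" and y: "y \<in> carrier_vec n"
  shows "sq_norm_vec (Tm *\<^sub>v x) \<le> g * sq_norm_vec (x - y)
    + (sq_norm_vec (Tm *\<^sub>v ((g \<cdot>\<^sub>m res g) *\<^sub>v y)) - g * sq_norm_vec ((g \<cdot>\<^sub>m res g) *\<^sub>v y - y))"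
proof -
  define ay where "ay = (g \<cdot>\<^sub>m res g) *\<^sub>v y"
  have ay: "ay \<in> carrier_vec n"
    unfolding ay_def by (rule mult_mat_vec_carrier[OF smult_carrier_mat[OF res_carrier[OF g]] y])
  have May: "gram *\<^sub>v ay = g \<cdot>\<^sub>v ay - g \<cdot>\<^sub>v y" unfolding ay_def
    by (rule gram_scaled_res_vec[OF g y])
  define u where "u = x - ay"
  have u: "u \<in> carrier_vec n" using x ay by (simp add: u_def)
  define r where "r = Tm *\<^sub>v ay"
  have r: "r \<in> carrier_vec m" using Tm ay by (simp add: r_def)
  have tx: "Tm *\<^sub>v x \<in> carrier_vec m" using Tm x by simp
  have Tu: "Tm *\<^sub>v u = Tm *\<^sub>v x - r" unfolding u_def r_def
    by (rule mult_minus_distrib_mat_vec[OF Tm x ay])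
  have F1: "sq_norm_vec (Tm *\<^sub>v u) = sq_norm_vec (Tm *\<^sub>v x) - 2 * scalar_prod (Tm *\<^sub>v x) r + sq_norm_vec r"
    unfolding Tu by (rule sq_norm_vec_minus[OF tx r])
  have F2: "0 \<le> g * sq_norm_vec u - sq_norm_vec (Tm *\<^sub>v u)"
    using quadratic_shift_nonneg[OF g u] quadratic_shift[OF u, of g] by simp
  have F3: "sq_norm_vec u = sq_norm_vec x - 2 * scalar_prod x ay + sq_norm_vec ay" unfolding u_def
    by (rule sq_norm_vec_minus[OF x ay])
  have F4: "sq_norm_vec (x - y) = sq_norm_vec x - 2 * scalar_prod x y + sq_norm_vec y"
    by (rule sq_norm_vec_minus[OF x y])
  have F5: "sq_norm_vec (ay - y) = sq_norm_vec ay - 2 * scalar_prod ay y + sq_norm_vec y"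
    by (rule sq_norm_vec_minus[OF ay y])
  have F6: "scalar_prod (Tm *\<^sub>v x) r = g * scalar_prod x ay - g * scalar_prod x y"
  proof -
    have "scalar_prod (Tm *\<^sub>v x) r = scalar_prod x (gram *\<^sub>v ay)"
      unfolding r_def gram_def by (rule scalar_prod_transpose_mult[OF Tm x ay, symmetric])
    also have "\<dots> = scalar_prod x (g \<cdot>\<^sub>v ay) - scalar_prod x (g \<cdot>\<^sub>v y)"
      unfolding May by (rule scalar_prod_minus_distrib[of _ n]) (use x ay y in auto)
    finally show ?thesis using x ay y by simp
  qed
  have F7: "sq_norm_vec r = g * sq_norm_vec ay - g * scalar_prod ay y"
  proof -
    have "sq_norm_vec r = scalar_prod ay (gram *\<^sub>v ay)" unfolding r_def
      by (rule quadratic_gram[OF ay, symmetric])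
    also have "\<dots> = scalar_prod ay (g \<cdot>\<^sub>v ay) - scalar_prod ay (g \<cdot>\<^sub>v y)"
      unfolding May by (rule scalar_prod_minus_distrib[of _ n]) (use ay y in auto)
    finally show ?thesis using ay y by (simp add: sq_norm_vec_def)
  qed
  have G3: "g * sq_norm_vec u = g * sq_norm_vec x - 2 * (g * scalar_prod x ay) + g * sq_norm_vec ay"
    unfolding F3 by (simp add: algebra_simps)
  have G4: "g * sq_norm_vec (x - y) = g * sq_norm_vec x - 2 * (g * scalar_prod x y) + g * sq_norm_vec y"
    unfolding F4 by (simp add: algebra_simps)
  have G5: "g * sq_norm_vec (ay - y) = g * sq_norm_vec ay - 2 * (g * scalar_prod ay y) + g * sq_norm_vec y"
    unfolding F5 by (simp add: algebra_simps)
  show ?thesis unfolding ay_def[symmetric] r_def[symmetric] using F1 F2 G3 G4 G5 F6 F7 by linarith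
qed

lemma scaled_res_sym: assumes g: "g > lam_max"
  shows "transpose_mat (g \<cdot>\<^sub>m res g) = g \<cdot>\<^sub>m res g"
proof (rule eq_matI)
  fix i j assume "i < dim_row (g \<cdot>\<^sub>m res g)" "j < dim_col (g \<cdot>\<^sub>m res g)"
  hence ij: "i < n" "j < n" using res_carrier[OF g] by auto
  have "res g $$ (j,i) = res g $$ (i,j)"
    using arg_cong[OF res_sym[OF g], of "\<lambda>X. X $$ (i,j)"] ij res_carrier[OF g] by simp
  thus "transpose_mat (g \<cdot>\<^sub>m res g) $$ (i,j) = (g \<cdot>\<^sub>m res g) $$ (i,j)"
    using ij res_carrier[OF g] by simp
qed (use res_carrier[OF g] in auto)

lemma scaled_res_fixes_kernel:
  assumes g: "g > lam_max" and W: "W \<in> carrier_mat n k" and TW: "Tm * W = 0\<^sub>m m k"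
  shows "(g \<cdot>\<^sub>m res g) * W = W"
proof -
  have R: "res g \<in> carrier_mat n n" and RP: "res g * shift g = 1\<^sub>m n"
    using res_inverse[OF g] by auto
  have "gram * W = transpose_mat Tm * (Tm * W)"
    unfolding gram_def using Tm W by (simp add: assoc_mult_mat[of _ n m _ n _ k])
  hence MW: "gram * W = 0\<^sub>m n k" using TW Tm by simp
  have "shift g * W = (g \<cdot>\<^sub>m 1\<^sub>m n) * W - gram * W"
    unfolding shift_def by (rule minus_mult_distrib_mat[OF _ gram_carrier W]) simp
  also have "(g \<cdot>\<^sub>m 1\<^sub>m n) * W = g \<cdot>\<^sub>m W"
    using W by (simp add: mult_smult_assoc_mat[of _ n n _ k])
  finally have PW: "shift g * W = g \<cdot>\<^sub>m W" unfolding MW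
    by (rule trans, intro eq_matI) (use W in auto)
  have "W = (res g * shift g) * W" using RP W by simp
  also have "\<dots> = res g * (g \<cdot>\<^sub>m W)" using R W
    by (simp add: assoc_mult_mat[of _ n n _ n _ k] PW)
  also have "\<dots> = (g \<cdot>\<^sub>m res g) * W" using R W
    by (simp add: mult_smult_distrib mult_smult_assoc_mat)
  finally show ?thesis by simp
qed

end

section \<open>Second moments and Wasserstein balls\<close>

definition sq_norm_map :: "real mat \<Rightarrow> nat \<Rightarrow> (nat \<Rightarrow> real) \<Rightarrow> real" where
  "sq_norm_map X N xi = sq_norm_vec (X *\<^sub>v Matrix.vec N xi)"

lemma sq_norm_map_nonneg: "0 \<le> sq_norm_map X N xi"
  by (simp add: sq_norm_map_def sq_norm_vec_nonneg)

lemma sq_norm_map_sum: assumes X: "X \<in> carrier_mat m N"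
  shows "sq_norm_map X N xi = (\<Sum>r<m. (\<Sum>c<N. X $$ (r,c) * xi c)^2)"
proof -
  have "sq_norm_map X N xi = (\<Sum>r<m. ((X *\<^sub>v Matrix.vec N xi) $ r)^2)"
    unfolding sq_norm_map_def by (rule sq_norm_vec_sum) (use X in auto)
  also have "\<dots> = (\<Sum>r<m. (\<Sum>c<N. X $$ (r,c) * xi c)^2)"
    by (rule sum.cong) (use X in \<open>auto simp: scalar_prod_def atLeast0LessThan\<close>)
  finally show ?thesis .
qed

lemma measurable_component_RN: "i < N \<Longrightarrow> (\<lambda>x. x i) \<in> borel_measurable (RN N)"
  unfolding RN_def by (rule measurable_component_singleton) auto

lemma measurable_linear_RN: "(\<lambda>x. \<Sum>c<N. a c * x c) \<in> borel_measurable (RN N)"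
  by (intro borel_measurable_sum borel_measurable_times borel_measurable_const measurable_component_RN) auto

lemma measurable_sq_norm_map: assumes X: "X \<in> carrier_mat m N"
  shows "sq_norm_map X N \<in> borel_measurable (RN N)"
proof -
  have "sq_norm_map X N = (\<lambda>xi. \<Sum>r<m. (\<Sum>c<N. X $$ (r,c) * xi c)^2)"
    using sq_norm_map_sum[OF X] by (intro ext)
  moreover have "(\<lambda>xi. \<Sum>r<m. (\<Sum>c<N. X $$ (r,c) * xi c)^2) \<in> borel_measurable (RN N)"
    by (intro borel_measurable_sum borel_measurable_power measurable_linear_RN)
  ultimately show ?thesis by simp
qed

lemma measurable_sqnorm: "sqnorm N \<in> borel_measurable (RN N)"
  unfolding sqnorm_def
  by (intro borel_measurable_sum borel_measurable_power measurable_component_RN) auto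

lemma measurable_sqnorm_diff: "(\<lambda>z. sqnorm N (\<lambda>i. fst z i - snd z i)) \<in> borel_measurable (RN N \<Otimes>\<^sub>M RN N)"
  unfolding sqnorm_def by (intro borel_measurable_sum borel_measurable_power borel_measurable_diff
        measurable_compose[OF measurable_fst measurable_component_RN] measurable_compose[OF measurable_snd measurable_component_RN]) auto

lemma sqnorm_nonneg: "0 \<le> sqnorm N x" unfolding sqnorm_def by (auto intro!: sum_nonneg)

lemma sqnorm_eq_sq_norm_vec: "sqnorm N x = sq_norm_vec (Matrix.vec N x)"
  by (simp add: sqnorm_def sq_norm_vec_sum[of _ N])

lemma sqnorm_diff_vec: "sqnorm N (\<lambda>i. x i - y i) = sq_norm_vec (Matrix.vec N x - Matrix.vec N y)"
proof -
  have "Matrix.vec N (\<lambda>i. x i - y i) = Matrix.vec N x - Matrix.vec N y"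
    by (rule eq_vecI) auto
  thus ?thesis by (simp add: sqnorm_eq_sq_norm_vec)
qed

lemma nn_integral_le_coupling_cost:
  assumes C: "C \<in> couplings N P P0"
    and fm: "f \<in> borel_measurable (RN N)" and qm: "q \<in> borel_measurable (RN N)"
    and a: "0 \<le> a" and qn: "\<And>y. 0 \<le> q y"
    and pw: "\<And>x y. f x \<le> a * sqnorm N (\<lambda>i. x i - y i) + q y"
  shows "(\<integral>\<^sup>+x. ennreal (f x) \<partial>P)
    \<le> ennreal a * (\<integral>\<^sup>+z. ennreal (sqnorm N (\<lambda>i. fst z i - snd z i)) \<partial>C) + (\<integral>\<^sup>+y. ennreal (q y) \<partial>P0)"
  (is "?X \<le> ennreal a * (\<integral>\<^sup>+z. ennreal (?cost z) \<partial>C) + ?Q")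
proof -
  have sC: "sets C = sets (RN N \<Otimes>\<^sub>M RN N)" and dfst: "distr C (RN N) fst = P"
    and dsnd: "distr C (RN N) snd = P0" using C unfolding couplings_def by auto
  have mfst: "fst \<in> measurable C (RN N)"
    using measurable_fst measurable_cong_sets[OF sC refl] by blast
  have msnd: "snd \<in> measurable C (RN N)"
    using measurable_snd measurable_cong_sets[OF sC refl] by blast
  have mC: "g \<in> borel_measurable C" if "g \<in> borel_measurable (RN N \<Otimes>\<^sub>M RN N)" for g
    using that measurable_cong_sets[OF sC refl] by blast
  have "?X = (\<integral>\<^sup>+x. ennreal (f x) \<partial>distr C (RN N) fst)" using dfst by simp
  also have "\<dots> = (\<integral>\<^sup>+z. ennreal (f (fst z)) \<partial>C)"
    by (rule nn_integral_distr[OF mfst]) (use measurable_compose[OF fm measurable_ennreal] in simp)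
  also have "\<dots> \<le> (\<integral>\<^sup>+z. ennreal (a * ?cost z) + ennreal (q (snd z)) \<partial>C)"
  proof (rule nn_integral_mono)
    fix z
    have "ennreal (f (fst z)) \<le> ennreal (a * ?cost z + q (snd z))" using pw
      by (rule ennreal_leI)
    also have "\<dots> = ennreal (a * ?cost z) + ennreal (q (snd z))"
      using a qn sqnorm_nonneg by (simp add: ennreal_plus)
    finally show "ennreal (f (fst z)) \<le> ennreal (a * ?cost z) + ennreal (q (snd z))" .
  qed
  also have "\<dots> = (\<integral>\<^sup>+z. ennreal (a * ?cost z) \<partial>C) + (\<integral>\<^sup>+z. ennreal (q (snd z)) \<partial>C)"
    by (rule nn_integral_add; rule measurable_compose[OF _ measurable_ennreal]) (auto intro!: mC borel_measurable_times measurable_sqnorm_diff measurable_compose[OF msnd qm])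
  also have "(\<integral>\<^sup>+z. ennreal (a * ?cost z) \<partial>C) = (\<integral>\<^sup>+z. ennreal a * ennreal (?cost z) \<partial>C)"
    using a sqnorm_nonneg by (simp add: ennreal_mult)
  also have "\<dots> = ennreal a * (\<integral>\<^sup>+z. ennreal (?cost z) \<partial>C)"
    by (rule nn_integral_cmult, rule measurable_compose[OF _ measurable_ennreal], rule mC, rule measurable_sqnorm_diff)
  also have "(\<integral>\<^sup>+z. ennreal (q (snd z)) \<partial>C) = (\<integral>\<^sup>+y. ennreal (q y) \<partial>distr C (RN N) snd)"
    by (rule nn_integral_distr[OF msnd, symmetric]) (use measurable_compose[OF qm measurable_ennreal] in simp)
  also have "\<dots> = ?Q" using dsnd by simp
  finally show ?thesis .
qed

lemma wball_coupling_approx: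
  assumes P: "P \<in> wball N P0 \<rho>" and e: "0 < e"
  obtains C where "C \<in> couplings N P P0"
    and "(\<integral>\<^sup>+z. ennreal (sqnorm N (\<lambda>i. fst z i - snd z i)) \<partial>C) \<le> ennreal (\<rho>^2 + e)"
proof -
  let ?cost = "\<lambda>z. sqnorm N (\<lambda>i. fst z i - snd z i)"
  have W: "wasserstein2_sq N P P0 \<le> ennreal (\<rho>^2)" using P unfolding wball_def by auto
  have fin: "wasserstein2_sq N P P0 \<noteq> \<infinity>"
  proof
    assume "wasserstein2_sq N P P0 = \<infinity>"
    with W have "\<top> \<le> ennreal (\<rho>^2)" by simp
    thus False using top_unique ennreal_neq_top by metis
  qed
  obtain C where C: "C \<in> couplings N P P0"
    and lt: "(\<integral>\<^sup>+z. ennreal (?cost z) \<partial>C) < wasserstein2_sq N P P0 + e"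
    using INF_approx_ennreal[OF e wasserstein2_sq_def fin] by blast
  have "(\<integral>\<^sup>+z. ennreal (?cost z) \<partial>C) \<le> ennreal (\<rho>^2) + ennreal e"
    using lt W by (meson add_right_mono less_imp_le order_trans)
  also have "\<dots> = ennreal (\<rho>^2 + e)" using e by (simp add: ennreal_plus)
  finally show ?thesis using C that by blast
qed

lemma nn_integral_wball_le:
  assumes P: "P \<in> wball N P0 \<rho>"
    and fm: "f \<in> borel_measurable (RN N)" and qm: "q \<in> borel_measurable (RN N)"
    and a: "0 \<le> a" and qn: "\<And>y. 0 \<le> q y"
    and pw: "\<And>x y. f x \<le> a * sqnorm N (\<lambda>i. x i - y i) + q y"
  shows "(\<integral>\<^sup>+x. ennreal (f x) \<partial>P) \<le> ennreal (a * \<rho>^2) + (\<integral>\<^sup>+y. ennreal (q y) \<partial>P0)"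
proof (rule ennreal_le_epsilon)
  let ?cost = "\<lambda>z. sqnorm N (\<lambda>i. fst z i - snd z i)"
  let ?X = "\<integral>\<^sup>+x. ennreal (f x) \<partial>P"
  let ?Q = "\<integral>\<^sup>+y. ennreal (q y) \<partial>P0"
  fix e :: real assume e: "0 < e"
  define e' where "e' = e / (a + 1)"
  have e': "0 < e'" unfolding e'_def using e a by simp
  have ae: "a * e' \<le> e" unfolding e'_def using e a by (simp add: field_simps)
  obtain C where C: "C \<in> couplings N P P0"
    and c: "(\<integral>\<^sup>+z. ennreal (?cost z) \<partial>C) \<le> ennreal (\<rho>^2 + e')"
    by (rule wball_coupling_approx[OF P e'])
  have "?X \<le> ennreal a * (\<integral>\<^sup>+z. ennreal (?cost z) \<partial>C) + ?Q"
    by (rule nn_integral_le_coupling_cost[OF C fm qm a qn pw])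
  also have "\<dots> \<le> ennreal a * ennreal (\<rho>^2 + e') + ?Q"
    by (intro add_mono mult_left_mono c) auto
  also have "ennreal a * ennreal (\<rho>^2 + e') = ennreal (a * (\<rho>^2 + e'))"
    by (rule ennreal_mult[symmetric]) (use a e' in auto)
  also have "\<dots> \<le> ennreal (a * \<rho>^2 + e)" using ae
    by (intro ennreal_leI) (simp add: distrib_left)
  also have "\<dots> = ennreal (a * \<rho>^2) + ennreal e" by (rule ennreal_plus) (use a e in auto)
  finally show "?X \<le> ennreal (a * \<rho>^2) + ?Q + ennreal e" by (simp add: ac_simps)
qed

locale identity_covariance =
  fixes P0 :: "(nat \<Rightarrow> real) measure" and N :: nat
  assumes P0: "P0 \<in> distrs2 N"
    and cov: "\<forall>i < N. \<forall>j < N. (\<integral>xi. xi i * xi j \<partial>P0) = (if i = j then 1 else 0)"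
begin

lemma prob_space_P0: "prob_space P0" and sets_P0: "sets P0 = sets (RN N)"
  and nn_integral_sqnorm_P0_finite: "(\<integral>\<^sup>+ x. ennreal (sqnorm N x) \<partial>P0) < \<infinity>"
  using P0 unfolding distrs2_def by auto

lemma measurable_P0I: "f \<in> borel_measurable (RN N) \<Longrightarrow> f \<in> borel_measurable P0"
  using measurable_cong_sets[OF sets_P0 refl] by blast

lemma integrable_component_prod: assumes i: "i < N" and j: "j < N"
  shows "integrable P0 (\<lambda>x. x i * x j)"
proof (rule integrableI_bounded)
  show "(\<lambda>x. x i * x j) \<in> borel_measurable P0"
    by (intro measurable_P0I borel_measurable_times measurable_component_RN i j)
  have "(\<integral>\<^sup>+ x. ennreal (norm (x i * x j)) \<partial>P0) \<le> (\<integral>\<^sup>+ x. ennreal (2 * sqnorm N x) \<partial>P0)"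
  proof (rule nn_integral_mono)
    fix x :: "nat \<Rightarrow> real"
    have a: "(x i)^2 \<le> sqnorm N x" unfolding sqnorm_def
      by (rule member_le_sum[of i "{..<N}" "\<lambda>k. (x k)^2"]) (use i in auto)
    have b: "(x j)^2 \<le> sqnorm N x" unfolding sqnorm_def
      by (rule member_le_sum[of j "{..<N}" "\<lambda>k. (x k)^2"]) (use j in auto)
    have h: "0 \<le> (\<bar>x i\<bar> - \<bar>x j\<bar>)^2" by simp
    have h2: "(\<bar>x i\<bar> - \<bar>x j\<bar>)^2 = (x i)^2 + (x j)^2 - 2 * (\<bar>x i\<bar> * \<bar>x j\<bar>)"
      by (simp add: power2_eq_square algebra_simps)
    have h3: "0 \<le> \<bar>x i\<bar> * \<bar>x j\<bar>" by simp
    have "\<bar>x i * x j\<bar> \<le> (x i)^2 + (x j)^2"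
      using h h2 h3 unfolding abs_mult by linarith
    thus "ennreal (norm (x i * x j)) \<le> ennreal (2 * sqnorm N x)"
      using a b by (intro ennreal_leI) simp
  qed
  also have "\<dots> = 2 * (\<integral>\<^sup>+ x. ennreal (sqnorm N x) \<partial>P0)"
    by (subst ennreal_mult) (auto intro!: nn_integral_cmult measurable_P0I measurable_sqnorm simp: sqnorm_nonneg)
  also have "\<dots> < \<infinity>" using nn_integral_sqnorm_P0_finite
    by (simp add: ennreal_mult_less_top)
  finally show "(\<integral>\<^sup>+ x. ennreal (norm (x i * x j)) \<partial>P0) < \<infinity>" .
qed

lemma integral_sq_linear: "integrable P0 (\<lambda>x. (\<Sum>c<N. a c * x c)^2) \<and>
   (\<integral>x. (\<Sum>c<N. a c * x c)^2 \<partial>P0) = (\<Sum>c<N. (a c)^2)"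
proof -
  have eq: "(\<Sum>c<N. a c * x c)^2 = (\<Sum>c<N. \<Sum>d<N. (a c * a d) * (x c * x d))" for x :: "nat \<Rightarrow> real"
    by (simp add: power2_eq_square sum_product algebra_simps)
  have ii: "integrable P0 (\<lambda>x. (\<Sum>c<N. \<Sum>d<N. (a c * a d) * (x c * x d)))"
    by (intro Bochner_Integration.integrable_sum integrable_mult_right integrable_component_prod) auto
  have ic: "integrable P0 (\<lambda>x. \<Sum>d<N. (a c * a d) * (x c * x d))" if "c \<in> {..<N}" for c
    by (rule Bochner_Integration.integrable_sum, rule integrable_mult_right, rule integrable_component_prod) (use that in auto)
  have icd: "integrable P0 (\<lambda>x. (a c * a d) * (x c * x d))" if "c \<in> {..<N}" "d \<in> {..<N}" for c d
    by (rule integrable_mult_right, rule integrable_component_prod) (use that in auto)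
  have "(\<integral>x. (\<Sum>c<N. \<Sum>d<N. (a c * a d) * (x c * x d)) \<partial>P0)
      = (\<Sum>c<N. \<integral>x. (\<Sum>d<N. (a c * a d) * (x c * x d)) \<partial>P0)"
    by (rule Bochner_Integration.integral_sum[OF ic])
  also have "\<dots> = (\<Sum>c<N. \<Sum>d<N. \<integral>x. (a c * a d) * (x c * x d) \<partial>P0)"
    by (intro sum.cong refl Bochner_Integration.integral_sum icd) auto
  also have "\<dots> = (\<Sum>c<N. \<Sum>d<N. (a c * a d) * (\<integral>x. x c * x d \<partial>P0))"
    by simp
  also have "\<dots> = (\<Sum>c<N. \<Sum>d<N. (if c = d then a c * a d else 0))"
    using cov by (intro sum.cong refl) auto
  also have "\<dots> = (\<Sum>c<N. (a c)^2)" by (simp add: power2_eq_square)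
  finally show ?thesis using ii unfolding eq by simp
qed

lemma integral_sq_norm_map: assumes X: "X \<in> carrier_mat m N"
  shows "integrable P0 (sq_norm_map X N) \<and> integral\<^sup>L P0 (sq_norm_map X N) = frobenius_sq X"
proof -
  have e: "sq_norm_map X N = (\<lambda>xi. \<Sum>r<m. (\<Sum>c<N. X $$ (r,c) * xi c)^2)"
    using sq_norm_map_sum[OF X] by (intro ext)
  have "integrable P0 (\<lambda>xi. \<Sum>r<m. (\<Sum>c<N. X $$ (r,c) * xi c)^2)"
    using integral_sq_linear by (intro Bochner_Integration.integrable_sum) auto
  moreover have "(\<integral>xi. (\<Sum>r<m. (\<Sum>c<N. X $$ (r,c) * xi c)^2) \<partial>P0) = frobenius_sq X"
    using integral_sq_linear
    by (subst Bochner_Integration.integral_sum) (use X in \<open>auto simp: frobenius_sq_def\<close>)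
  ultimately show ?thesis unfolding e by simp
qed

lemma nn_integral_sq_norm_map: assumes X: "X \<in> carrier_mat m N"
  shows "(\<integral>\<^sup>+ xi. ennreal (sq_norm_map X N xi) \<partial>P0) = ennreal (frobenius_sq X)"
  using integral_sq_norm_map[OF X] sq_norm_map_nonneg by (subst nn_integral_eq_integral) auto

definition linear_map :: "real mat \<Rightarrow> (nat \<Rightarrow> real) \<Rightarrow> (nat \<Rightarrow> real)" where
  "linear_map B xi = (\<lambda>i\<in>{..<N}. (B *\<^sub>v Matrix.vec N xi) $ i)"

lemma vec_linear_map: assumes B: "B \<in> carrier_mat N N"
  shows "Matrix.vec N (linear_map B xi) = B *\<^sub>v Matrix.vec N xi"
  by (rule eq_vecI) (use B in \<open>auto simp: linear_map_def\<close>)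

lemma measurable_linear_map: assumes B: "B \<in> carrier_mat N N"
  shows "linear_map B \<in> measurable (RN N) (RN N)"
proof -
  have e: "(\<lambda>xi. (B *\<^sub>v Matrix.vec N xi) $ i) = (\<lambda>xi. \<Sum>c<N. B $$ (i,c) * xi c)" if "i < N" for i
    using B that by (auto simp: scalar_prod_def atLeast0LessThan intro!: ext sum.cong)
  have "(\<lambda>xi. \<lambda>i\<in>{..<N}. (B *\<^sub>v Matrix.vec N xi) $ i) \<in> measurable (RN N) (PiM {..<N} (\<lambda>_. borel))"
    by (rule measurable_restrict) (simp add: e measurable_linear_RN)
  thus ?thesis unfolding linear_map_def by (simp add: RN_def)
qed

lemma sq_norm_map_linear_map: assumes B: "B \<in> carrier_mat N N" and X: "X \<in> carrier_mat m N"
  shows "sq_norm_map X N (linear_map B xi) = sq_norm_map (X * B) N xi"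
  unfolding sq_norm_map_def vec_linear_map[OF B] using X B by simp

lemma measurable_linear_map_P0:
  assumes B: "B \<in> carrier_mat N N" shows "linear_map B \<in> measurable P0 (RN N)"
  using measurable_linear_map[OF B] measurable_cong_sets[OF sets_P0 refl] by blast

lemma nn_integral_distr_linear_map:
  assumes B: "B \<in> carrier_mat N N" and X: "X \<in> carrier_mat m N"
  shows "(\<integral>\<^sup>+xi. ennreal (sq_norm_map X N xi) \<partial>distr P0 (RN N) (linear_map B)) = ennreal (frobenius_sq (X * B))"
proof -
  have "(\<integral>\<^sup>+xi. ennreal (sq_norm_map X N xi) \<partial>distr P0 (RN N) (linear_map B)) = (\<integral>\<^sup>+xi. ennreal (sq_norm_map X N (linear_map B xi)) \<partial>P0)"
    by (rule nn_integral_distr[OF measurable_linear_map_P0[OF B]]) (simp add: measurable_compose[OF measurable_sq_norm_map[OF X] measurable_ennreal])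
  also have "\<dots> = (\<integral>\<^sup>+xi. ennreal (sq_norm_map (X * B) N xi) \<partial>P0)"
    by (simp add: sq_norm_map_linear_map[OF B X])
  also have "\<dots> = ennreal (frobenius_sq (X * B))"
    by (rule nn_integral_sq_norm_map[of "X * B" m]) (use X B in simp)
  finally show ?thesis .
qed

lemma sqnorm_eq_sq_norm_map: "sqnorm N x = sq_norm_map (1\<^sub>m N) N x"
  by (simp add: sqnorm_eq_sq_norm_vec sq_norm_map_def sq_norm_vec_def)

lemma distr_linear_map_distrs2: assumes B: "B \<in> carrier_mat N N"
  shows "distr P0 (RN N) (linear_map B) \<in> distrs2 N"
proof -
  have "prob_space (distr P0 (RN N) (linear_map B))"
    by (rule prob_space.prob_space_distr[OF prob_space_P0 measurable_linear_map_P0[OF B]])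
  moreover have "(\<integral>\<^sup>+x. ennreal (sqnorm N x) \<partial>distr P0 (RN N) (linear_map B)) < \<infinity>"
    unfolding sqnorm_eq_sq_norm_map nn_integral_distr_linear_map[OF B one_carrier_mat] by simp
  ultimately show ?thesis unfolding distrs2_def by simp
qed

lemma coupling_linear_map: assumes B: "B \<in> carrier_mat N N"
  shows "distr P0 (RN N \<Otimes>\<^sub>M RN N) (\<lambda>xi. (linear_map B xi, xi))
    \<in> couplings N (distr P0 (RN N) (linear_map B)) P0"
proof -
  have mpair: "(\<lambda>xi. (linear_map B xi, xi)) \<in> measurable P0 (RN N \<Otimes>\<^sub>M RN N)"
    by (rule measurable_Pair[OF measurable_linear_map_P0[OF B] measurable_ident_sets[OF sets_P0]])
  show ?thesis
    unfolding couplings_def using prob_space.prob_space_distr[OF prob_space_P0 mpair]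
      distr_distr[OF measurable_fst mpair] distr_distr[OF measurable_snd mpair]
    by (simp add: comp_def distr_id2[OF sets_P0[symmetric]])
qed

lemma sqnorm_linear_map_diff: assumes B: "B \<in> carrier_mat N N"
  shows "sqnorm N (\<lambda>i. linear_map B xi i - xi i) = sq_norm_map (B - 1\<^sub>m N) N xi"
proof -
  have e1: "(B - 1\<^sub>m N) *\<^sub>v Matrix.vec N xi = B *\<^sub>v Matrix.vec N xi - Matrix.vec N xi"
    by (subst minus_mult_distrib_mat_vec[OF B one_carrier_mat]) auto
  have "Matrix.vec N (\<lambda>i. linear_map B xi i - xi i) = (B - 1\<^sub>m N) *\<^sub>v Matrix.vec N xi"
    unfolding e1 by (rule eq_vecI) (use B in \<open>auto simp: linear_map_def\<close>)
  thus ?thesis by (simp add: sqnorm_eq_sq_norm_vec sq_norm_map_def)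
qed

lemma distr_linear_map_in_wball:
  assumes B: "B \<in> carrier_mat N N" and rho: "frobenius_sq (B - 1\<^sub>m N) \<le> \<rho>^2"
  shows "distr P0 (RN N) (linear_map B) \<in> wball N P0 \<rho>"
proof -
  let ?C = "distr P0 (RN N \<Otimes>\<^sub>M RN N) (\<lambda>xi. (linear_map B xi, xi))"
  have mpair: "(\<lambda>xi. (linear_map B xi, xi)) \<in> measurable P0 (RN N \<Otimes>\<^sub>M RN N)"
    by (rule measurable_Pair[OF measurable_linear_map_P0[OF B] measurable_ident_sets[OF sets_P0]])
  have "wasserstein2_sq N (distr P0 (RN N) (linear_map B)) P0
      \<le> (\<integral>\<^sup>+z. ennreal (sqnorm N (\<lambda>i. fst z i - snd z i)) \<partial>?C)"
    unfolding wasserstein2_sq_def by (rule INF_lower[OF coupling_linear_map[OF B]])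
  also have "\<dots> = (\<integral>\<^sup>+xi. ennreal (sqnorm N (\<lambda>i. linear_map B xi i - xi i)) \<partial>P0)"
    by (subst nn_integral_distr[OF mpair])
      (simp_all add: measurable_compose[OF measurable_sqnorm_diff measurable_ennreal])
  also have "\<dots> = ennreal (frobenius_sq (B - 1\<^sub>m N))"
    unfolding sqnorm_linear_map_diff[OF B]
    by (rule nn_integral_sq_norm_map[of "B - 1\<^sub>m N" N], rule minus_carrier_mat[OF one_carrier_mat])
  also have "\<dots> \<le> ennreal (\<rho>^2)" using rho by (rule ennreal_leI)
  finally show ?thesis unfolding wball_def using distr_linear_map_distrs2[OF B] by simp
qed

end

section \<open>The error operator\<close>

context
  fixes H :: "real mat" and Nw Ny :: nat
  assumes H: "H \<in> carrier_mat Ny Nw"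
begin

lemma err_op_carrier:
  "K \<in> carrier_mat m Ny \<Longrightarrow> L \<in> carrier_mat m Nw \<Longrightarrow> err_op K H L \<in> carrier_mat m (Nw + Ny)"
  using H by (auto simp: err_op_def)

lemma err_op_index:
  assumes K: "K \<in> carrier_mat m Ny" and L: "L \<in> carrier_mat m Nw" and r: "r < m"
    and c: "c < Nw + Ny"
  shows "err_op K H L $$ (r,c) = (if c < Nw then (K * H - L) $$ (r,c) else K $$ (r, c - Nw))"
  using H K L r c by (auto simp: err_op_def)

lemma mult_err_op_identity: assumes D: "D \<in> carrier_mat m Ny"
  shows "D * err_op (1\<^sub>m Ny) H (0\<^sub>m Ny Nw) = err_op D H (0\<^sub>m m Nw)"
proof (rule eq_matI)
  have G: "err_op (1\<^sub>m Ny) H (0\<^sub>m Ny Nw) \<in> carrier_mat Ny (Nw + Ny)"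
    by (rule err_op_carrier) auto
  fix r c assume rc: "r < dim_row (err_op D H (0\<^sub>m m Nw))" "c < dim_col (err_op D H (0\<^sub>m m Nw))"
  hence r: "r < m" and c: "c < Nw + Ny" using err_op_carrier[OF D, of "0\<^sub>m m Nw"] by auto
  have "(D * err_op (1\<^sub>m Ny) H (0\<^sub>m Ny Nw)) $$ (r,c) = (\<Sum>j<Ny. D $$ (r,j) * err_op (1\<^sub>m Ny) H (0\<^sub>m Ny Nw) $$ (j,c))"
    using D G r c by (auto simp: scalar_prod_def atLeast0LessThan intro!: sum.cong)
  also have "\<dots> = (\<Sum>j<Ny. D $$ (r,j) * (if c < Nw then H $$ (j,c) else (if j = c - Nw then 1 else 0)))"
    by (intro sum.cong refl) (use H c in \<open>auto simp: err_op_index[OF one_carrier_mat zero_carrier_mat]\<close>)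
  also have "\<dots> = err_op D H (0\<^sub>m m Nw) $$ (r,c)"
  proof (cases "c < Nw")
    case True
    thus ?thesis using D H r c
      by (auto simp: err_op_index scalar_prod_def atLeast0LessThan intro!: sum.cong)
  next
    case False
    hence "c - Nw < Ny" using c by simp
    thus ?thesis using D H r c False by (auto simp: err_op_index if_distrib cong: if_cong)
  qed
  finally show "(D * err_op (1\<^sub>m Ny) H (0\<^sub>m Ny Nw)) $$ (r,c) = err_op D H (0\<^sub>m m Nw) $$ (r,c)" .
next
  show "dim_row (D * err_op (1\<^sub>m Ny) H (0\<^sub>m Ny Nw)) = dim_row (err_op D H (0\<^sub>m m Nw))"
    using D by (simp add: err_op_def)
  show "dim_col (D * err_op (1\<^sub>m Ny) H (0\<^sub>m Ny Nw)) = dim_col (err_op D H (0\<^sub>m m Nw))"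
    using D by (simp add: err_op_def)
qed

lemma err_op_decompose:
  assumes K: "K \<in> carrier_mat m Ny" and K0: "K0 \<in> carrier_mat m Ny"
    and L: "L \<in> carrier_mat m Nw"
  shows "err_op K H L = err_op K0 H L + (K - K0) * err_op (1\<^sub>m Ny) H (0\<^sub>m Ny Nw)"
proof -
  have D: "K - K0 \<in> carrier_mat m Ny" by (rule minus_carrier_mat[OF K0])
  have "(K - K0) * H = K * H - K0 * H" using K K0 H by (simp add: minus_mult_distrib_mat)
  show ?thesis unfolding mult_err_op_identity[OF D]
  proof (rule eq_matI)
    fix r c assume "r < dim_row (err_op K0 H L + err_op (K - K0) H (0\<^sub>m m Nw))"
      "c < dim_col (err_op K0 H L + err_op (K - K0) H (0\<^sub>m m Nw))"
    hence r: "r < m" and c: "c < Nw + Ny" using err_op_carrier[OF D, of "0\<^sub>m m Nw"] by auto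
    have sum: "(err_op K0 H L + err_op (K - K0) H (0\<^sub>m m Nw)) $$ (r,c) = err_op K0 H L $$ (r,c) + err_op (K - K0) H (0\<^sub>m m Nw) $$ (r,c)"
      using carrier_matD[OF err_op_carrier[OF D, of "0\<^sub>m m Nw"]] r c
      by (intro index_add_mat) auto
    have e1: "((K - K0) * H) $$ (r,c) = (K * H) $$ (r,c) - (K0 * H) $$ (r,c)" if "c < Nw"
      unfolding \<open>(K - K0) * H = K * H - K0 * H\<close> by (rule index_minus_mat) (use r that K0 H in auto)
    have e2: "(K - K0) $$ (r, c - Nw) = K $$ (r, c - Nw) - K0 $$ (r, c - Nw)" if "\<not> c < Nw"
      by (rule index_minus_mat) (use r c that K0 in auto)
    have e3: "(K * H - L) $$ (r,c) = (K * H) $$ (r,c) - L $$ (r,c)" "(K0 * H - L) $$ (r,c) = (K0 * H) $$ (r,c) - L $$ (r,c)"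
      if "c < Nw" by (rule index_minus_mat; use r that L in auto)+
    have e4: "((K - K0) * H - 0\<^sub>m m Nw) $$ (r,c) = ((K - K0) * H) $$ (r,c)" if "c < Nw"
      by (subst index_minus_mat) (use r that in auto)
    show "err_op K H L $$ (r,c) = (err_op K0 H L + err_op (K - K0) H (0\<^sub>m m Nw)) $$ (r,c)"
      unfolding sum err_op_index[OF K L r c] err_op_index[OF K0 L r c] err_op_index[OF D zero_carrier_mat r c]
      using e1 e2 e3 e4 by auto
  qed (use err_op_carrier[OF K L] err_op_carrier[OF K0 L] err_op_carrier[OF D, of "0\<^sub>m m Nw"] in auto)
qed

lemma err_op_mult_transpose:
  assumes K1: "K1 \<in> carrier_mat m1 Ny" and L1: "L1 \<in> carrier_mat m1 Nw"
  and K2: "K2 \<in> carrier_mat m2 Ny" and L2: "L2 \<in> carrier_mat m2 Nw"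
  shows "err_op K1 H L1 * transpose_mat (err_op K2 H L2) = (K1 * H - L1) * transpose_mat (K2 * H - L2) + K1 * transpose_mat K2"
proof (rule eq_matI)
  fix r k assume "r < dim_row ((K1 * H - L1) * transpose_mat (K2 * H - L2) + K1 * transpose_mat K2)"
    "k < dim_col ((K1 * H - L1) * transpose_mat (K2 * H - L2) + K1 * transpose_mat K2)"
  hence r: "r < m1" and k: "k < m2" using K1 K2 by auto
  have E1: "err_op K1 H L1 \<in> carrier_mat m1 (Nw + Ny)" by (rule err_op_carrier[OF K1 L1])
  have E2: "err_op K2 H L2 \<in> carrier_mat m2 (Nw + Ny)" by (rule err_op_carrier[OF K2 L2])
  have "(err_op K1 H L1 * transpose_mat (err_op K2 H L2)) $$ (r,k)
      = (\<Sum>c<Nw + Ny. err_op K1 H L1 $$ (r,c) * err_op K2 H L2 $$ (k,c))"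
    using E1 E2 r k by (auto simp: scalar_prod_def atLeast0LessThan intro!: sum.cong)
  also have "\<dots> = (\<Sum>c<Nw. err_op K1 H L1 $$ (r,c) * err_op K2 H L2 $$ (k,c))
      + (\<Sum>j<Ny. err_op K1 H L1 $$ (r,Nw + j) * err_op K2 H L2 $$ (k,Nw + j))"
    by (rule sum_lessThan_add)
  also have "\<dots> = (\<Sum>c<Nw. (K1 * H - L1) $$ (r,c) * (K2 * H - L2) $$ (k,c)) + (\<Sum>j<Ny. K1 $$ (r,j) * K2 $$ (k,j))"
    using r k by (simp add: err_op_index[OF K1 L1] err_op_index[OF K2 L2])
  also have "\<dots> = ((K1 * H - L1) * transpose_mat (K2 * H - L2) + K1 * transpose_mat K2) $$ (r,k)"
    using K1 K2 L1 L2 H r k by (auto simp: scalar_prod_def atLeast0LessThan intro!: sum.cong)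
  finally show "(err_op K1 H L1 * transpose_mat (err_op K2 H L2)) $$ (r,k)
      = ((K1 * H - L1) * transpose_mat (K2 * H - L2) + K1 * transpose_mat K2) $$ (r,k)" .
qed (use K1 K2 L1 L2 in \<open>auto simp: err_op_def\<close>)

end

section \<open>Optimality of the central estimator\<close>

locale central_estimation = identity_covariance P0 "Nw + Ny"
  for P0 :: "(nat \<Rightarrow> real) measure" and Nw Ny :: nat +
  fixes H L :: "real mat" and Ns :: nat
  assumes H: "H \<in> carrier_mat Ny Nw" and L: "L \<in> carrier_mat Ns Nw" and Npos: "0 < Nw + Ny"
begin

definition S where "S = 1\<^sub>m Ny + H * transpose_mat H"

lemma S_carrier: "S \<in> carrier_mat Ny Ny" using H by (simp add: S_def)

lemma S_quad: assumes v: "v \<in> carrier_vec Ny"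
  shows "scalar_prod v (S *\<^sub>v v) = sq_norm_vec v + sq_norm_vec (transpose_mat H *\<^sub>v v)"
proof -
  have HH: "H * transpose_mat H \<in> carrier_mat Ny Ny" using H by simp
  have "S *\<^sub>v v = 1\<^sub>m Ny *\<^sub>v v + (H * transpose_mat H) *\<^sub>v v"
    unfolding S_def by (rule add_mult_distrib_mat_vec[OF one_carrier_mat HH v])
  hence "scalar_prod v (S *\<^sub>v v) = scalar_prod v v + scalar_prod v ((H * transpose_mat H) *\<^sub>v v)"
    using v HH by (simp add: scalar_prod_add_distrib[of _ Ny])
  moreover have "scalar_prod v ((H * transpose_mat H) *\<^sub>v v) = sq_norm_vec (transpose_mat H *\<^sub>v v)"
    using scalar_prod_transpose_mult_self[of "transpose_mat H" Nw Ny v] H v by simp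
  ultimately show ?thesis by (simp add: sq_norm_vec_def)
qed

definition Si where "Si = the (mat_inverse S)"

lemma S_inverse: "S * Si = 1\<^sub>m Ny" "Si * S = 1\<^sub>m Ny" "Si \<in> carrier_mat Ny Ny"
proof -
  have "v = 0\<^sub>v Ny" if v: "v \<in> carrier_vec Ny" "S *\<^sub>v v = 0\<^sub>v Ny" for v
  proof -
    have "sq_norm_vec v + sq_norm_vec (transpose_mat H *\<^sub>v v) = 0" using S_quad[OF v(1)] v
      by simp
    hence "sq_norm_vec v = 0"
      using sq_norm_vec_nonneg[of v] sq_norm_vec_nonneg[of "transpose_mat H *\<^sub>v v"]
      by linarith
    thus ?thesis by (rule sq_norm_vec_eq_zeroD[OF v(1)])
  qed
  hence "S * Si = 1\<^sub>m Ny \<and> Si * S = 1\<^sub>m Ny \<and> Si \<in> carrier_mat Ny Ny"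
    unfolding Si_def by (rule mat_inverse_of_trivial_kernel[OF S_carrier])
  thus "S * Si = 1\<^sub>m Ny" "Si * S = 1\<^sub>m Ny" "Si \<in> carrier_mat Ny Ny" by auto
qed

definition K0 where "K0 = central_estimator H L"

lemma K0_eq: "K0 = L * transpose_mat H * Si"
  using H unfolding K0_def central_estimator_def Si_def S_def by simp

lemma K0_carrier: "K0 \<in> carrier_mat Ns Ny" unfolding K0_eq using L H S_inverse(3) by simp

lemma K0_mult_S: "K0 * S = L * transpose_mat H"
proof -
  have "K0 * S = L * transpose_mat H * (Si * S)" unfolding K0_eq
    by (rule assoc_mult_mat[of _ Ns Ny _ Ny _ Ny]) (use L H S_inverse(3) S_carrier in auto)
  thus ?thesis using S_inverse(2) L H by simp
qed

definition G where "G = err_op (1\<^sub>m Ny) H (0\<^sub>m Ny Nw)"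
definition T0 where "T0 = err_op K0 H L"

lemma G_carrier: "G \<in> carrier_mat Ny (Nw + Ny)" unfolding G_def
  by (rule err_op_carrier[OF H]) auto
lemma T0_carrier: "T0 \<in> carrier_mat Ns (Nw + Ny)" unfolding T0_def
  by (rule err_op_carrier[OF H K0_carrier L])

lemma central_error_orthogonal: "T0 * transpose_mat G = 0\<^sub>m Ns Ny"
proof -
  have Hc: "transpose_mat H \<in> carrier_mat Nw Ny" using H by simp
  have "T0 * transpose_mat G = (K0 * H - L) * transpose_mat (1\<^sub>m Ny * H - 0\<^sub>m Ny Nw) + K0 * transpose_mat (1\<^sub>m Ny)"
    unfolding T0_def G_def by (rule err_op_mult_transpose[OF H K0_carrier L]) auto
  also have "1\<^sub>m Ny * H - 0\<^sub>m Ny Nw = H" by (rule eq_matI) (use H in auto)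
  also have "K0 * transpose_mat (1\<^sub>m Ny) = K0" using K0_carrier by simp
  also have "(K0 * H - L) * transpose_mat H = K0 * H * transpose_mat H - L * transpose_mat H"
    by (rule minus_mult_distrib_mat[OF _ L Hc]) (use K0_carrier H in simp)
  also have "K0 * H * transpose_mat H = K0 * (H * transpose_mat H)"
    using K0_carrier H Hc by (simp add: assoc_mult_mat[of _ Ns Ny _ Nw _ Ny])
  finally have T: "T0 * transpose_mat G = K0 * (H * transpose_mat H) - L * transpose_mat H + K0" .
  have "K0 * S = K0 * 1\<^sub>m Ny + K0 * (H * transpose_mat H)"
    unfolding S_def by (rule mult_add_distrib_mat[OF K0_carrier]) (use H in auto)
  also have "K0 * 1\<^sub>m Ny = K0" using K0_carrier by simp
  finally have E: "K0 + K0 * (H * transpose_mat H) = L * transpose_mat H" using K0_mult_S by simp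
  show ?thesis unfolding T
  proof (rule eq_matI)
    fix i j assume "i < dim_row (0\<^sub>m Ns Ny)" "j < dim_col (0\<^sub>m Ns Ny)"
    hence ij: "i < Ns" "j < Ny" by auto
    have "(K0 + K0 * (H * transpose_mat H)) $$ (i,j) = (L * transpose_mat H) $$ (i,j)" using E
      by simp
    thus "(K0 * (H * transpose_mat H) - L * transpose_mat H + K0) $$ (i,j) = 0\<^sub>m Ns Ny $$ (i,j)"
      using ij K0_carrier H L by simp
  qed (use K0_carrier H L in auto)
qed

lemma frobenius_sq_mult_G_pos: assumes K: "K \<in> carrier_mat Ns Ny" and ne: "K \<noteq> K0"
  shows "0 < frobenius_sq ((K - K0) * G)"
proof -
  have D: "K - K0 \<in> carrier_mat Ns Ny" by (rule minus_carrier_mat[OF K0_carrier])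
  have "K - K0 \<noteq> 0\<^sub>m Ns Ny"
  proof
    assume z: "K - K0 = 0\<^sub>m Ns Ny"
    have "K = K0"
    proof (rule eq_matI)
      fix i j assume "i < dim_row K0" "j < dim_col K0"
      hence ij: "i < Ns" "j < Ny" using K0_carrier by auto
      have "K $$ (i,j) - K0 $$ (i,j) = (K - K0) $$ (i,j)" using ij K0_carrier by simp
      thus "K $$ (i,j) = K0 $$ (i,j)" unfolding z using ij by simp
    qed (use K K0_carrier in auto)
    thus False using ne by simp
  qed
  then obtain i j where ij: "i < Ns" "j < Ny" "(K - K0) $$ (i,j) \<noteq> 0"
    by (rule mat_nonzero_index[OF D])
  have DG: "(K - K0) * G = err_op (K - K0) H (0\<^sub>m Ns Nw)"
    unfolding G_def by (rule mult_err_op_identity[OF H D])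
  have c: "err_op (K - K0) H (0\<^sub>m Ns Nw) \<in> carrier_mat Ns (Nw + Ny)"
    by (rule err_op_carrier[OF H D]) auto
  have "err_op (K - K0) H (0\<^sub>m Ns Nw) $$ (i, Nw + j) = (K - K0) $$ (i,j)"
    using err_op_index[OF H D zero_carrier_mat, of i "Nw + j"] ij by simp
  hence "((K - K0) $$ (i,j))^2 \<le> frobenius_sq ((K - K0) * G)"
    unfolding DG using sq_index_le_frobenius_sq[OF c, of i "Nw + j"] ij by simp
  moreover have "0 < ((K - K0) $$ (i,j))^2" using ij by simp
  ultimately show ?thesis by linarith
qed

lemma frobenius_sq_err_op_mult:
  assumes K: "K \<in> carrier_mat Ns Ny" and A: "A \<in> carrier_mat (Nw + Ny) (Nw + Ny)"
  and GA: "G * A = G" and AG: "A * transpose_mat G = transpose_mat G"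
  shows "frobenius_sq (err_op K H L * A) = frobenius_sq (T0 * A) + frobenius_sq ((K - K0) * G)"
proof -
  have D: "K - K0 \<in> carrier_mat Ns Ny" by (rule minus_carrier_mat[OF K0_carrier])
  have DGc: "(K - K0) * G \<in> carrier_mat Ns (Nw + Ny)" using D G_carrier by simp
  have "err_op K H L * A = (T0 + (K - K0) * G) * A"
    unfolding T0_def G_def by (subst err_op_decompose[OF H K K0_carrier L]) simp
  also have "\<dots> = T0 * A + (K - K0) * G * A"
    by (rule add_mult_distrib_mat[OF T0_carrier DGc A])
  also have "(K - K0) * G * A = (K - K0) * G"
    using D G_carrier A GA by (simp add: assoc_mult_mat[of _ Ns Ny _ "Nw + Ny" _ "Nw + Ny"])
  finally have e: "err_op K H L * A = T0 * A + (K - K0) * G" .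
  have TA: "T0 * A \<in> carrier_mat Ns (Nw + Ny)" using T0_carrier A by simp
  have "frobenius_inner (T0 * A) ((K - K0) * G) = frobenius_inner (T0 * A * transpose_mat G) (K - K0)"
    by (rule frobenius_inner_mult[OF TA D G_carrier])
  also have "T0 * A * transpose_mat G = T0 * transpose_mat G" using T0_carrier A G_carrier AG
      by (simp add: assoc_mult_mat[of _ Ns "Nw + Ny" _ "Nw + Ny" _ Ny])
  also have "\<dots> = 0\<^sub>m Ns Ny" by (rule central_error_orthogonal)
  finally have "frobenius_inner (T0 * A) ((K - K0) * G) = 0" by (simp add: frobenius_inner_def)
  thus ?thesis unfolding e using frobenius_sq_add[OF TA DGc] by simp
qed

lemma worst_mse_eq: assumes K: "K \<in> carrier_mat Ns Ny"
  shows "worst_mse H L K P0 \<rho> = (SUP P \<in> wball (Nw + Ny) P0 \<rho>. \<integral>\<^sup>+xi. ennreal (sq_norm_map (err_op K H L) (Nw + Ny) xi) \<partial>P)"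
proof -
  have "dim_col (err_op K H L) = Nw + Ny" using err_op_carrier[OF H K L] by simp
  thus ?thesis unfolding worst_mse_def Let_def sq_norm_map_def sq_norm_vec_def by simp
qed

lemma worst_mse_ge:
  assumes K: "K \<in> carrier_mat Ns Ny" and A: "A \<in> carrier_mat (Nw + Ny) (Nw + Ny)"
  and r: "frobenius_sq (A - 1\<^sub>m (Nw + Ny)) \<le> \<rho>^2"
  shows "ennreal (frobenius_sq (err_op K H L * A)) \<le> worst_mse H L K P0 \<rho>"
proof -
  have "ennreal (frobenius_sq (err_op K H L * A)) = (\<integral>\<^sup>+xi. ennreal (sq_norm_map (err_op K H L) (Nw + Ny) xi) \<partial>distr P0 (RN (Nw + Ny)) (linear_map A))"
    by (rule nn_integral_distr_linear_map[OF A err_op_carrier[OF H K L], symmetric])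
  also have "\<dots> \<le> worst_mse H L K P0 \<rho>"
    unfolding worst_mse_eq[OF K] by (rule SUP_upper[OF distr_linear_map_in_wball[OF A r]])
  finally show ?thesis .
qed

lemma worst_mse_le: assumes K: "K \<in> carrier_mat Ns Ny"
  and qm: "q \<in> borel_measurable (RN (Nw + Ny))" and a: "0 \<le> a"
    and qn: "\<And>y. 0 \<le> q y"
  and pw: "\<And>x y. sq_norm_map (err_op K H L) (Nw + Ny) x \<le> a * sqnorm (Nw + Ny) (\<lambda>i. x i - y i) + q y"
  shows "worst_mse H L K P0 \<rho> \<le> ennreal (a * \<rho>^2) + (\<integral>\<^sup>+y. ennreal (q y) \<partial>P0)"
  unfolding worst_mse_eq[OF K]
  by (rule SUP_least, rule nn_integral_wball_le[OF _ measurable_sq_norm_map[OF err_op_carrier[OF H K L]] qm a qn pw])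

lemma worst_mse_ge_central_plus_gap:
  assumes K: "K \<in> carrier_mat Ns Ny" and A: "A \<in> carrier_mat (Nw + Ny) (Nw + Ny)"
    and GA: "G * A = G" and AG: "A * transpose_mat G = transpose_mat G"
    and r: "frobenius_sq (A - 1\<^sub>m (Nw + Ny)) \<le> \<rho>^2"
  shows "ennreal (frobenius_sq (T0 * A) + frobenius_sq ((K - K0) * G)) \<le> worst_mse H L K P0 \<rho>"
  using worst_mse_ge[OF K A r] frobenius_sq_err_op_mult[OF K A GA AG] by simp

lemma worst_mse_central_le_perturb: assumes e: "0 < e"
  shows "worst_mse H L K0 P0 \<rho>
    \<le> ennreal ((1 + 1 / e) * frobenius_sq T0 * \<rho>^2 + (1 + e) * frobenius_sq T0)"
proof -
  let ?N = "Nw + Ny"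
  define a where "a = (1 + 1 / e) * frobenius_sq T0"
  have a: "0 \<le> a" unfolding a_def using e frobenius_sq_nonneg[of T0] by simp
  have "worst_mse H L K0 P0 \<rho>
      \<le> ennreal (a * \<rho>^2) + (\<integral>\<^sup>+y. ennreal ((1 + e) * sq_norm_map T0 ?N y) \<partial>P0)"
  proof (rule worst_mse_le[OF K0_carrier])
    show "(\<lambda>y. (1 + e) * sq_norm_map T0 ?N y) \<in> borel_measurable (RN ?N)"
      by (intro borel_measurable_times borel_measurable_const measurable_sq_norm_map[OF T0_carrier])
    show "0 \<le> a" by (rule a)
    show "\<And>y. 0 \<le> (1 + e) * sq_norm_map T0 ?N y" using e sq_norm_map_nonneg by simp
    fix x y
    have "sq_norm_vec (T0 *\<^sub>v Matrix.vec ?N x) \<le> (1 + e) * sq_norm_vec (T0 *\<^sub>v Matrix.vec ?N y)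
        + (1 + 1 / e) * frobenius_sq T0 * sq_norm_vec (Matrix.vec ?N x - Matrix.vec ?N y)"
      by (rule sq_norm_mult_mat_vec_perturb[OF T0_carrier _ _ e]) auto
    thus "sq_norm_map (err_op K0 H L) ?N x \<le> a * sqnorm ?N (\<lambda>i. x i - y i) + (1 + e) * sq_norm_map T0 ?N y"
      unfolding T0_def[symmetric] a_def sqnorm_diff_vec by (simp add: sq_norm_map_def algebra_simps)
  qed
  also have "(\<integral>\<^sup>+y. ennreal ((1 + e) * sq_norm_map T0 ?N y) \<partial>P0)
      = (\<integral>\<^sup>+y. ennreal (1 + e) * ennreal (sq_norm_map T0 ?N y) \<partial>P0)"
    using e sq_norm_map_nonneg by (simp add: ennreal_mult)
  also have "\<dots> = ennreal (1 + e) * (\<integral>\<^sup>+y. ennreal (sq_norm_map T0 ?N y) \<partial>P0)"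
    by (rule nn_integral_cmult, rule measurable_P0I, rule measurable_compose[OF _ measurable_ennreal],
        rule measurable_sq_norm_map[OF T0_carrier])
  also have "\<dots> = ennreal ((1 + e) * frobenius_sq T0)"
    unfolding nn_integral_sq_norm_map[OF T0_carrier] using e
    by (simp add: ennreal_mult frobenius_sq_nonneg)
  also have "ennreal (a * \<rho>^2) + ennreal ((1 + e) * frobenius_sq T0)
      = ennreal (a * \<rho>^2 + (1 + e) * frobenius_sq T0)"
    by (rule ennreal_plus[symmetric]) (use a e frobenius_sq_nonneg[of T0] in auto)
  finally show ?thesis unfolding a_def .
qed

lemma worst_mse_central_le_degenerate: assumes "\<rho> = 0 \<or> T0 = 0\<^sub>m Ns (Nw + Ny)"
  shows "worst_mse H L K0 P0 \<rho> \<le> ennreal (frobenius_sq T0)"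
proof (cases "T0 = 0\<^sub>m Ns (Nw + Ny)")
  case True
  hence "frobenius_sq T0 = 0" by (simp add: frobenius_sq_def)
  thus ?thesis using worst_mse_central_le_perturb[of 1 \<rho>] by simp
next
  case False
  hence \<rho>: "\<rho> = 0" using assms by simp
  show ?thesis
  proof (rule ennreal_le_epsilon)
    fix d :: real assume d: "0 < d"
    define e where "e = d / (frobenius_sq T0 + 1)"
    have e: "0 < e" unfolding e_def using d frobenius_sq_nonneg[of T0] by simp
    have "e * frobenius_sq T0 \<le> d"
      unfolding e_def using d frobenius_sq_nonneg[of T0] by (simp add: field_simps)
    hence "(1 + e) * frobenius_sq T0 \<le> frobenius_sq T0 + d" by (simp add: algebra_simps)
    hence "ennreal ((1 + e) * frobenius_sq T0) \<le> ennreal (frobenius_sq T0 + d)"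
      by (rule ennreal_leI)
    also have "\<dots> = ennreal (frobenius_sq T0) + ennreal d"
      by (rule ennreal_plus) (use d frobenius_sq_nonneg[of T0] in auto)
    finally have "ennreal ((1 + e) * frobenius_sq T0) \<le> ennreal (frobenius_sq T0) + ennreal d" .
    thus "worst_mse H L K0 P0 \<rho> \<le> ennreal (frobenius_sq T0) + ennreal d"
      using worst_mse_central_le_perturb[OF e, of \<rho>] \<rho> by simp
  qed
qed

sublocale g: gram_resolvent T0 Ns "Nw + Ny" using T0_carrier Npos by unfold_locales

lemma least_favourable_map: assumes g: "g > g.lam_max"
  shows "g \<cdot>\<^sub>m g.res g \<in> carrier_mat (Nw + Ny) (Nw + Ny)"
    and "(g \<cdot>\<^sub>m g.res g) * transpose_mat G = transpose_mat G"
    and "G * (g \<cdot>\<^sub>m g.res g) = G"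
    and "frobenius_sq (g \<cdot>\<^sub>m g.res g - 1\<^sub>m (Nw + Ny)) = g.transport_cost g"
proof -
  let ?A = "g \<cdot>\<^sub>m g.res g"
  show A: "?A \<in> carrier_mat (Nw + Ny) (Nw + Ny)" using g.res_carrier[OF g] by simp
  show AG: "?A * transpose_mat G = transpose_mat G"
    by (rule g.scaled_res_fixes_kernel[OF g _ central_error_orthogonal]) (use G_carrier in simp)
  have "transpose_mat (G * ?A) = transpose_mat ?A * transpose_mat G"
    using G_carrier A by (simp add: transpose_mult[of _ Ny "Nw + Ny" _ "Nw + Ny"])
  also have "\<dots> = transpose_mat G" using g.scaled_res_sym[OF g] AG by simp
  finally show "G * ?A = G" by simp
  show "frobenius_sq (?A - 1\<^sub>m (Nw + Ny)) = g.transport_cost g"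
    unfolding g.transport_cost_def g.res_gram[OF g] ..
qed

lemma central_error_dual_bound: assumes g: "g > g.lam_max"
  defines "A \<equiv> g \<cdot>\<^sub>m g.res g"
  shows "sq_norm_map (err_op K0 H L) (Nw + Ny) x
    \<le> g * sqnorm (Nw + Ny) (\<lambda>i. x i - y i)
      + (sq_norm_map (T0 * A) (Nw + Ny) y - g * sq_norm_map (A - 1\<^sub>m (Nw + Ny)) (Nw + Ny) y)"
proof -
  let ?N = "Nw + Ny"
  have A: "A \<in> carrier_mat ?N ?N" unfolding A_def by (rule least_favourable_map(1)[OF g])
  have vx: "Matrix.vec ?N x \<in> carrier_vec ?N" and vy: "Matrix.vec ?N y \<in> carrier_vec ?N"
    by auto
  have "(T0 * A) *\<^sub>v Matrix.vec ?N y = T0 *\<^sub>v (A *\<^sub>v Matrix.vec ?N y)"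
    using T0_carrier A vy by simp
  moreover have "(A - 1\<^sub>m ?N) *\<^sub>v Matrix.vec ?N y = A *\<^sub>v Matrix.vec ?N y - Matrix.vec ?N y"
    using minus_mult_distrib_mat_vec[OF A one_carrier_mat vy] vy by simp
  ultimately show ?thesis using g.pointwise_dual_bound[OF g vx vy]
      unfolding T0_def[symmetric] sqnorm_diff_vec A_def[symmetric] by (simp add: sq_norm_map_def)
qed

lemma worst_mse_central_le_dual:
  assumes g: "g > g.lam_max" and cost: "g.transport_cost g = \<rho>^2"
  shows "worst_mse H L K0 P0 \<rho> \<le> ennreal (frobenius_sq (T0 * (g \<cdot>\<^sub>m g.res g)))"
proof -
  let ?N = "Nw + Ny"
  define A where "A = g \<cdot>\<^sub>m g.res g"
  have A: "A \<in> carrier_mat ?N ?N" and frA: "frobenius_sq (A - 1\<^sub>m ?N) = \<rho>^2"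
    using least_favourable_map[OF g] cost unfolding A_def by auto
  define q where "q = (\<lambda>y. sq_norm_map (T0 * A) ?N y - g * sq_norm_map (A - 1\<^sub>m ?N) ?N y)"
  have TA: "T0 * A \<in> carrier_mat Ns ?N" using T0_carrier A by simp
  have AI: "A - 1\<^sub>m ?N \<in> carrier_mat ?N ?N"
    by (rule minus_carrier_mat[OF one_carrier_mat])
  have pw: "sq_norm_map (err_op K0 H L) ?N x \<le> g * sqnorm ?N (\<lambda>i. x i - y i) + q y" for x y
    unfolding q_def A_def by (rule central_error_dual_bound[OF g])
  have qn: "0 \<le> q y" for y
    using pw[of y y] sq_norm_map_nonneg[of "err_op K0 H L" ?N y] by (simp add: sqnorm_def)
  have qm: "q \<in> borel_measurable (RN ?N)"
    unfolding q_def by (intro borel_measurable_diff borel_measurable_times borel_measurable_const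
      measurable_sq_norm_map[OF TA] measurable_sq_norm_map[OF AI])
  have g0: "0 \<le> g" using g g.lam_max_nonneg by simp
  have i1: "integrable P0 (sq_norm_map (T0 * A) ?N)"
      "integral\<^sup>L P0 (sq_norm_map (T0 * A) ?N) = frobenius_sq (T0 * A)"
    using integral_sq_norm_map[OF TA] by auto
  have i2: "integrable P0 (sq_norm_map (A - 1\<^sub>m ?N) ?N)"
      "integral\<^sup>L P0 (sq_norm_map (A - 1\<^sub>m ?N) ?N) = \<rho>^2"
    using integral_sq_norm_map[OF AI] frA by auto
  have "integrable P0 q" unfolding q_def using i1 i2 by auto
  moreover have int_q: "integral\<^sup>L P0 q = frobenius_sq (T0 * A) - g * \<rho>^2"
    unfolding q_def using i1 i2 by (subst Bochner_Integration.integral_diff) auto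
  ultimately have int_q_nn: "(\<integral>\<^sup>+y. ennreal (q y) \<partial>P0) = ennreal (frobenius_sq (T0 * A) - g * \<rho>^2)"
    using qn by (subst nn_integral_eq_integral) auto
  have "0 \<le> frobenius_sq (T0 * A) - g * \<rho>^2"
    using int_q qn by (metis integral_nonneg_AE AE_I2)
  have "worst_mse H L K0 P0 \<rho> \<le> ennreal (g * \<rho>^2) + (\<integral>\<^sup>+y. ennreal (q y) \<partial>P0)"
    by (rule worst_mse_le[OF K0_carrier qm g0 qn pw])
  also have "\<dots> = ennreal (g * \<rho>^2 + (frobenius_sq (T0 * A) - g * \<rho>^2))"
    unfolding int_q_nn
    by (rule ennreal_plus[symmetric]) (use g0 \<open>0 \<le> frobenius_sq (T0 * A) - g * \<rho>^2\<close> in auto)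
  finally show ?thesis unfolding A_def by simp
qed

theorem central_estimator_strictly_optimal:
  assumes rho: "0 \<le> \<rho>" and K: "K \<in> carrier_mat Ns Ny" and ne: "K \<noteq> K0"
  shows "worst_mse H L K0 P0 \<rho> < worst_mse H L K P0 \<rho>"
proof -
  let ?N = "Nw + Ny"
  have gap: "0 < frobenius_sq ((K - K0) * G)" by (rule frobenius_sq_mult_G_pos[OF K ne])
  show ?thesis
  proof (cases "\<rho> = 0 \<or> T0 = 0\<^sub>m Ns ?N")
    case True
    have "worst_mse H L K0 P0 \<rho> \<le> ennreal (frobenius_sq T0)"
      by (rule worst_mse_central_le_degenerate[OF True])
    also have "\<dots> < ennreal (frobenius_sq (T0 * 1\<^sub>m ?N) + frobenius_sq ((K - K0) * G))"
      using gap T0_carrier frobenius_sq_nonneg[of T0] by (simp add: ennreal_less_iff)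
    also have "\<dots> \<le> worst_mse H L K P0 \<rho>"
      by (rule worst_mse_ge_central_plus_gap[OF K one_carrier_mat])
        (use G_carrier in \<open>auto simp: frobenius_sq_def\<close>)
    finally show ?thesis .
  next
    case False
    hence "0 < \<rho>" "T0 \<noteq> 0\<^sub>m Ns ?N" using rho by auto
    then obtain g where g: "g > g.lam_max" and cost: "g.transport_cost g = \<rho>^2"
      using g.transport_cost_attains by blast
    note A = least_favourable_map[OF g]
    have "worst_mse H L K0 P0 \<rho> \<le> ennreal (frobenius_sq (T0 * (g \<cdot>\<^sub>m g.res g)))"
      by (rule worst_mse_central_le_dual[OF g cost])
    also have "\<dots> < ennreal (frobenius_sq (T0 * (g \<cdot>\<^sub>m g.res g)) + frobenius_sq ((K - K0) * G))"
      using gap frobenius_sq_nonneg by (simp add: ennreal_less_iff)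
    also have "\<dots> \<le> worst_mse H L K P0 \<rho>"
      by (rule worst_mse_ge_central_plus_gap[OF K A(1,3,2)]) (simp add: A(4) cost)
    finally show ?thesis .
  qed
qed

end

lemma horizon_op_carrier:
  "horizon_op A B C T \<in> carrier_mat (T * dim_row C) (dim_row A + (T - 1) * dim_col B)"
  by (simp add: horizon_op_def Let_def)

theorem lemma3p3:
  fixes A B Cy Cs :: "real mat" and dx dw dy ds T :: nat
    and P0 :: "(nat \<Rightarrow> real) measure"
  assumes dims: "0 < dx" "0 < dw" "0 < dy" "0 < ds"
    and A: "A \<in> carrier_mat dx dx" and B: "B \<in> carrier_mat dx dw"
    and Cy: "Cy \<in> carrier_mat dy dx" and Cs: "Cs \<in> carrier_mat ds dx"
    and det_y: "detectable A Cy" and det_s: "detectable A Cs"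
    and ctrb: "controllable A B"
    and T: "0 < T"
    and nominal: "P0 \<in> distrs2 ((dx + (T - 1) * dw) + T * dy)"
    and zero_mean: "\<forall>i < (dx + (T - 1) * dw) + T * dy. (\<integral>xi. xi i \<partial>P0) = 0"
    and identity_cov: "\<forall>i < (dx + (T - 1) * dw) + T * dy. \<forall>j < (dx + (T - 1) * dw) + T * dy.
                         (\<integral>xi. xi i * xi j \<partial>P0) = (if i = j then 1 else 0)"
  shows "\<forall>rho \<ge> 0.
           central_estimator (horizon_op A B Cy T) (horizon_op A B Cs T) \<in> carrier_mat (T * ds) (T * dy)
         \<and> (\<forall>K \<in> carrier_mat (T * ds) (T * dy).
              K \<noteq> central_estimator (horizon_op A B Cy T) (horizon_op A B Cs T) \<longrightarrow>
              worst_mse (horizon_op A B Cy T) (horizon_op A B Cs T)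
                 (central_estimator (horizon_op A B Cy T) (horizon_op A B Cs T)) P0 rho
              < worst_mse (horizon_op A B Cy T) (horizon_op A B Cs T) K P0 rho)"
proof (intro allI impI conjI)
  fix rho :: real assume "0 \<le> rho"
  let ?H = "horizon_op A B Cy T" and ?L = "horizon_op A B Cs T"
  have "?H \<in> carrier_mat (T * dy) (dx + (T - 1) * dw)" "?L \<in> carrier_mat (T * ds) (dx + (T - 1) * dw)"
    using horizon_op_carrier[of A B Cy T] horizon_op_carrier[of A B Cs T] A B Cy Cs by auto
  then interpret central_estimation P0 "dx + (T - 1) * dw" "T * dy" ?H ?L "T * ds"
    using dims nominal identity_cov by unfold_locales auto
  show "central_estimator ?H ?L \<in> carrier_mat (T * ds) (T * dy)"
    using K0_carrier unfolding K0_def .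
  show "\<forall>K \<in> carrier_mat (T * ds) (T * dy). K \<noteq> central_estimator ?H ?L \<longrightarrow>
      worst_mse ?H ?L (central_estimator ?H ?L) P0 rho < worst_mse ?H ?L K P0 rho"
    using central_estimator_strictly_optimal[OF \<open>0 \<le> rho\<close>] unfolding K0_def
    by blast
qed

end
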